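(* Let $T$ be an $\mathcal O$-operator on the Lie $\infty$-algebra $(E,M_E)$ with respect to an action $\Phi$ of $E$ on the Lie $\infty$-algebra $(V,M_V)$. Then $M_{V^T}:=\Phi^T+M_V$ is a Lie $\infty$-algebra structure on $V$ (a degree $+1$ coderivation of $\bar S(V)$ with $M_{V^T}^2=0$), and $T:(V,M_{V^T})\to(E,M_E)$ is a Lie $\infty$-morphism.
   Context: Graded vector spaces are $\mathbb Z$-graded, finite dimensional over $\mathbb R$ or $\mathbb C$, with Koszul signs. $\bar S(W)$ is the reduced graded symmetric coalgebra with unshuffle coproduct $\Delta$, Sweedler notation $\Delta(w)=w_{(1)}\otimes w_{(2)}$. A comorphism is a degree $0$ coalgebra morphism; a coderivation of degree $k$ is a degree $k$ map $Q$ with $\Delta Q=(Q\otimes\mathrm{id}+\mathrm{id}\otimes Q)\Delta$. A Lie $\infty$-algebra $(E,M_E)$ is a degree $+1$ coderivation of $\bar S(E)$ with $M_E^2=0$; a Lie $\infty$-morphism is a comorphism $F$ with $F\circ M_E=M_V\circ F$. $\mathrm{Coder}(\bar S(V))[1]$ is the symmetric DGLA with $\partial_{M_V}Q=-M_VQ+(-1)^{\deg Q}QM_V$, $[Q,P]=(-1)^{\deg Q}(QP-(-1)^{\deg Q\deg P}PQ)$. An action of $(E,M_E)$ on $(V,M_V)$ is a degree $+1$ linear map $\bar S(E)\to\mathrm{Coder}(\bar S(V))$, $x\mapsto\Phi_x$, with $\Phi_{M_E(x)}=\partial_{M_V}\Phi_x+\frac12[\Phi_{x_{(1)}},\Phi_{x_{(2)}}]$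 for all $x$ (last term $0$ for $x\in E$). For a degree $0$ map $T:\bar S(V)\to\bar S(E)$, $\Phi^T:\bar S(V)\to\bar S(V)$ is defined by $\Phi^T(v)=0$ for $v\in V$ and $\Phi^T(v)=\Phi_{T(v_{(1)})}v_{(2)}$ for $v\in S^{\ge2}(V)$. An $\mathcal O$-operator on $E$ with respect to $\Phi$ is a comorphism $T:\bar S(V)\to\bar S(E)$ with $M_E\circ T=T\circ(\Phi^T+M_V)$. *)

theory Defs
  imports Main
begin

text \<open>
A finite-dimensional Z-graded vector space W over a field 'k of characteristic 0
(covering R and C) is given by a finite homogeneous basis, i.e. a finite linearly ordered
type 'b together with a degree function d :: 'b => int.  The reduced graded symmetric
coalgebra S(W) (reduced, i.e. without constants) has as basis the monomials
e_l = b_1 b_2 ... b_n, where l = [b_1,...,b_n] is a nonempty sorted list in which no odd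
basis element is repeated.  An element of S(W) is a finitely supported coefficient function
on such lists.  An element of S(W) (x) S(U) is a finitely supported coefficient function on
pairs of lists.
\<close>

definition koz :: "int \<Rightarrow> 'k::field_char_0" where
  "koz n = (if even n then 1 else -1)"

definition ldeg :: "('b \<Rightarrow> int) \<Rightarrow> 'b list \<Rightarrow> int" where
  "ldeg d l = sum_list (map d l)"

definition valid :: "('b::linorder \<Rightarrow> int) \<Rightarrow> 'b list \<Rightarrow> bool" where
  "valid d l \<longleftrightarrow> l \<noteq> [] \<and> sorted l \<and> distinct (filter (\<lambda>x. odd (d x)) l)"

definition SymC :: "('b::{finite,linorder} \<Rightarrow> int) \<Rightarrow> ('b list \<Rightarrow> 'k::field_char_0) set" where
  "SymC d = {f. finite {l. f l \<noteq> 0} \<and> (\<forall>l. f l \<noteq> 0 \<longrightarrow> valid d l)}"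

definition bv :: "'b list \<Rightarrow> 'b list \<Rightarrow> 'k::field_char_0" where
  "bv l = (\<lambda>m. if m = l then 1 else 0)"

definition homog :: "('b \<Rightarrow> int) \<Rightarrow> int \<Rightarrow> ('b list \<Rightarrow> 'k::field_char_0) \<Rightarrow> bool" where
  "homog d n f \<longleftrightarrow> (\<forall>l. f l \<noteq> 0 \<longrightarrow> ldeg d l = n)"

text \<open>Koszul sign of the unshuffle sending w_1...w_n to w_I (x) w_J (J the complement of I).\<close>
definition usgn :: "('b \<Rightarrow> int) \<Rightarrow> 'b list \<Rightarrow> nat set \<Rightarrow> 'k::field_char_0" where
  "usgn d l I = (\<Prod>(i,j)\<in>{(i,j). i < j \<and> j < length l \<and> i \<notin> I \<and> j \<in> I}.
                    koz (d (l!i) * d (l!j)))"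

definition cop :: "('b \<Rightarrow> int) \<Rightarrow> ('b list \<Rightarrow> 'k::field_char_0) \<Rightarrow> ('b list \<times> 'b list \<Rightarrow> 'k)" where
  "cop d f = (\<lambda>(m1,m2). \<Sum>l\<in>{l. f l \<noteq> 0}. f l *
      (\<Sum>I\<in>{I. I \<subseteq> {..<length l} \<and> I \<noteq> {} \<and> I \<noteq> {..<length l}
               \<and> nths l I = m1 \<and> nths l ({..<length l} - I) = m2}. usgn d l I))"

text \<open>Tensor product of linear maps with Koszul sign:
  (P (x) Q)(a (x) b) = (-1)^(q |a|) P a (x) Q b, q the degree of Q.\<close>
definition tmap :: "('a \<Rightarrow> int) \<Rightarrow> int \<Rightarrow> (('a list \<Rightarrow> 'k::field_char_0) \<Rightarrow> ('c list \<Rightarrow> 'k))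
     \<Rightarrow> (('b list \<Rightarrow> 'k) \<Rightarrow> ('e list \<Rightarrow> 'k)) \<Rightarrow> ('a list \<times> 'b list \<Rightarrow> 'k) \<Rightarrow> ('c list \<times> 'e list \<Rightarrow> 'k)" where
  "tmap da q P Q g = (\<lambda>(x,y). \<Sum>(m1,m2)\<in>{p. g p \<noteq> 0}.
       g (m1,m2) * koz (q * ldeg da m1) * P (bv m1) x * Q (bv m2) y)"

text \<open>Linear maps S(A) -> S(B) (only their behaviour on the carrier matters).\<close>
definition linmap :: "('a::{finite,linorder} \<Rightarrow> int) \<Rightarrow> ('b::{finite,linorder} \<Rightarrow> int)
     \<Rightarrow> (('a list \<Rightarrow> 'k::field_char_0) \<Rightarrow> ('b list \<Rightarrow> 'k)) \<Rightarrow> bool" where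
  "linmap da db F \<longleftrightarrow> (\<forall>f\<in>SymC da. F f \<in> SymC db)
     \<and> (\<forall>f\<in>SymC da. \<forall>g\<in>SymC da. F (\<lambda>l. f l + g l) = (\<lambda>l. F f l + F g l))
     \<and> (\<forall>c. \<forall>f\<in>SymC da. F (\<lambda>l. c * f l) = (\<lambda>l. c * F f l))"

definition degmap :: "('a::{finite,linorder} \<Rightarrow> int) \<Rightarrow> ('b::{finite,linorder} \<Rightarrow> int) \<Rightarrow> int
     \<Rightarrow> (('a list \<Rightarrow> 'k::field_char_0) \<Rightarrow> ('b list \<Rightarrow> 'k)) \<Rightarrow> bool" where
  "degmap da db k F \<longleftrightarrow> (\<forall>n. \<forall>f\<in>SymC da. homog da n f \<longrightarrow> homog db (n + k) (F f))"

definition coder :: "('b::{finite,linorder} \<Rightarrow> int) \<Rightarrow> int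
     \<Rightarrow> (('b list \<Rightarrow> 'k::field_char_0) \<Rightarrow> ('b list \<Rightarrow> 'k)) \<Rightarrow> bool" where
  "coder d k Q \<longleftrightarrow> linmap d d Q \<and> degmap d d k Q
     \<and> (\<forall>f\<in>SymC d. cop d (Q f) = (\<lambda>p. tmap d 0 Q id (cop d f) p + tmap d k id Q (cop d f) p))"

definition comorph :: "('a::{finite,linorder} \<Rightarrow> int) \<Rightarrow> ('b::{finite,linorder} \<Rightarrow> int)
     \<Rightarrow> (('a list \<Rightarrow> 'k::field_char_0) \<Rightarrow> ('b list \<Rightarrow> 'k)) \<Rightarrow> bool" where
  "comorph da db F \<longleftrightarrow> linmap da db F \<and> degmap da db 0 F
     \<and> (\<forall>f\<in>SymC da. cop db (F f) = tmap da 0 F F (cop da f))"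

definition lie_inf :: "('b::{finite,linorder} \<Rightarrow> int)
     \<Rightarrow> (('b list \<Rightarrow> 'k::field_char_0) \<Rightarrow> ('b list \<Rightarrow> 'k)) \<Rightarrow> bool" where
  "lie_inf d M \<longleftrightarrow> coder d 1 M \<and> (\<forall>f\<in>SymC d. M (M f) = (\<lambda>l. 0))"

definition lie_morph :: "('a::{finite,linorder} \<Rightarrow> int) \<Rightarrow> ('b::{finite,linorder} \<Rightarrow> int)
     \<Rightarrow> (('a list \<Rightarrow> 'k::field_char_0) \<Rightarrow> ('a list \<Rightarrow> 'k)) \<Rightarrow> (('b list \<Rightarrow> 'k) \<Rightarrow> ('b list \<Rightarrow> 'k))
     \<Rightarrow> (('a list \<Rightarrow> 'k) \<Rightarrow> ('b list \<Rightarrow> 'k)) \<Rightarrow> bool" where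
  "lie_morph da db Ma Mb F \<longleftrightarrow> comorph da db F \<and> (\<forall>f\<in>SymC da. F (Ma f) = Mb (F f))"

text \<open>Differential and bracket of the symmetric DGLA Coder(S(V))[1]; q, p are the degrees
  of Q, P as coderivations.\<close>
definition dDiff :: "(('b list \<Rightarrow> 'k::field_char_0) \<Rightarrow> ('b list \<Rightarrow> 'k)) \<Rightarrow> int
     \<Rightarrow> (('b list \<Rightarrow> 'k) \<Rightarrow> ('b list \<Rightarrow> 'k)) \<Rightarrow> (('b list \<Rightarrow> 'k) \<Rightarrow> ('b list \<Rightarrow> 'k))" where
  "dDiff M q Q = (\<lambda>f l. - M (Q f) l + koz q * Q (M f) l)"

definition brk :: "int \<Rightarrow> int \<Rightarrow> (('b list \<Rightarrow> 'k::field_char_0) \<Rightarrow> ('b list \<Rightarrow> 'k))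
     \<Rightarrow> (('b list \<Rightarrow> 'k) \<Rightarrow> ('b list \<Rightarrow> 'k)) \<Rightarrow> (('b list \<Rightarrow> 'k) \<Rightarrow> ('b list \<Rightarrow> 'k))" where
  "brk q p Q P = (\<lambda>f l. koz q * (Q (P f) l - koz (q * p) * P (Q f) l))"

text \<open>Action of (E, ME) on (V, MV): x |-> Phi x, degree +1 linear map into Coder(S(V)),
  satisfying Phi_{ME x} = d_{MV} Phi_x + 1/2 [Phi_{x(1)}, Phi_{x(2)}] (for homogeneous x,
  hence for all x by linearity); the Sweedler sum is the bilinear extension over Delta x.\<close>
definition action :: "('e::{finite,linorder} \<Rightarrow> int) \<Rightarrow> ('v::{finite,linorder} \<Rightarrow> int)
     \<Rightarrow> (('e list \<Rightarrow> 'k::field_char_0) \<Rightarrow> ('e list \<Rightarrow> 'k)) \<Rightarrow> (('v list \<Rightarrow> 'k) \<Rightarrow> ('v list \<Rightarrow> 'k))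
     \<Rightarrow> (('e list \<Rightarrow> 'k) \<Rightarrow> ('v list \<Rightarrow> 'k) \<Rightarrow> ('v list \<Rightarrow> 'k)) \<Rightarrow> bool" where
  "action dE dV ME MV Phi \<longleftrightarrow>
     (\<forall>x\<in>SymC dE. \<forall>y\<in>SymC dE. \<forall>f\<in>SymC dV.
         Phi (\<lambda>l. x l + y l) f = (\<lambda>l. Phi x f l + Phi y f l))
   \<and> (\<forall>c. \<forall>x\<in>SymC dE. \<forall>f\<in>SymC dV. Phi (\<lambda>l. c * x l) f = (\<lambda>l. c * Phi x f l))
   \<and> (\<forall>n. \<forall>x\<in>SymC dE. homog dE n x \<longrightarrow> coder dV (n + 1) (Phi x))
   \<and> (\<forall>n. \<forall>x\<in>SymC dE. homog dE n x \<longrightarrow> (\<forall>f\<in>SymC dV.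
         Phi (ME x) f = (\<lambda>l. dDiff MV (n + 1) (Phi x) f l
            + (1/2) * (\<Sum>(m1,m2)\<in>{p. cop dE x p \<noteq> 0}. cop dE x (m1,m2) *
                 brk (ldeg dE m1 + 1) (ldeg dE m2 + 1) (Phi (bv m1)) (Phi (bv m2)) f l))))"

text \<open>Phi^T(v) = Phi_{T(v(1))} v(2) (bilinear extension over Delta v); this vanishes on V
  since the reduced coproduct vanishes there.\<close>
definition PhiT :: "('v::{finite,linorder} \<Rightarrow> int)
     \<Rightarrow> (('e list \<Rightarrow> 'k::field_char_0) \<Rightarrow> ('v list \<Rightarrow> 'k) \<Rightarrow> ('v list \<Rightarrow> 'k))
     \<Rightarrow> (('v list \<Rightarrow> 'k) \<Rightarrow> ('e list \<Rightarrow> 'k)) \<Rightarrow> ('v list \<Rightarrow> 'k) \<Rightarrow> ('v list \<Rightarrow> 'k)" where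
  "PhiT dV Phi T = (\<lambda>v l. \<Sum>(m1,m2)\<in>{p. cop dV v p \<noteq> 0}.
       cop dV v (m1,m2) * Phi (T (bv m1)) (bv m2) l)"

definition O_operator :: "('e::{finite,linorder} \<Rightarrow> int) \<Rightarrow> ('v::{finite,linorder} \<Rightarrow> int)
     \<Rightarrow> (('e list \<Rightarrow> 'k::field_char_0) \<Rightarrow> ('e list \<Rightarrow> 'k)) \<Rightarrow> (('v list \<Rightarrow> 'k) \<Rightarrow> ('v list \<Rightarrow> 'k))
     \<Rightarrow> (('e list \<Rightarrow> 'k) \<Rightarrow> ('v list \<Rightarrow> 'k) \<Rightarrow> ('v list \<Rightarrow> 'k))
     \<Rightarrow> (('v list \<Rightarrow> 'k) \<Rightarrow> ('e list \<Rightarrow> 'k)) \<Rightarrow> bool" where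
  "O_operator dE dV ME MV Phi T \<longleftrightarrow> comorph dV dE T
     \<and> (\<forall>f\<in>SymC dV. ME (T f) = T (\<lambda>l. PhiT dV Phi T f l + MV f l))"

end

theory Submission
  imports Defs
begin

text \<open>
  Write \<open>MT = PhiT + MV\<close>.  Each \<open>Phi x\<close> is a coderivation and the unshuffle coproduct is
  coassociative and graded cocommutative, so \<open>PhiT\<close>, and hence \<open>MT\<close>, is a coderivation of
  degree 1.  Expand \<open>MT (MT v)\<close> over the Sweedler components \<open>v(1) \<otimes> v(2)\<close>: the term
  \<open>MV (MV v)\<close> vanishes, and by the O-operator equation the terms where \<open>T\<close> is applied to
  \<open>MT v(1)\<close> combine to \<open>Phi (ME (T v(1))) v(2)\<close>.  The action identity expands this into
  \<open>\<partial>\<^bsub>MV\<^esub> Phi (T v(1))\<close>, which cancels the remaining terms involving \<open>MV\<close>, plus half a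
  bracket over the coproduct of \<open>T v(1)\<close>.  As \<open>T\<close> is a comorphism, that coproduct is the image
  of the coproduct of \<open>v(1)\<close>, and coassociativity and cocommutativity make the bracket cancel
  \<open>PhiT (PhiT v)\<close>.  That \<open>T\<close> is a Lie-infinity morphism is then the O-operator equation.
\<close>

lemma koz_add: "koz (a + b) = (koz a * koz b :: 'k::field_char_0)"
  by (auto simp: koz_def)

lemma koz_0 [simp]: "koz 0 = 1"
  by (simp add: koz_def)

lemma koz_plus_1: "koz (n + 1) = - (koz n :: 'k::field_char_0)"
  by (simp add: koz_def)

lemma koz_cong: "even (a - b) \<Longrightarrow> koz a = koz b"
  by (auto simp: koz_def)

lemma prod_koz: "finite A \<Longrightarrow> (\<Prod>x\<in>A. koz (f x)) = (koz (\<Sum>x\<in>A. f x) :: 'k::field_char_0)"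
  by (induction A rule: finite_induct) (auto simp: koz_add)

lemma ldeg_Nil [simp]: "ldeg d [] = 0"
  by (simp add: ldeg_def)

lemma ldeg_Cons [simp]: "ldeg d (a # l) = d a + ldeg d l"
  by (simp add: ldeg_def)

lemma ldeg_nths: "I \<subseteq> {..<length l} \<Longrightarrow> ldeg d (nths l I) = (\<Sum>j\<in>I. d (l ! j))"
proof (induction l arbitrary: I)
  case Nil
  then show ?case by simp
next
  case (Cons a l)
  let ?I = "{j. Suc j \<in> I}"
  have sub: "?I \<subseteq> {..<length l}"
    using Cons.prems by auto
  have I_eq: "I = (if 0 \<in> I then {0} else {}) \<union> Suc ` ?I"
    by (auto simp: image_iff) (metis not0_implies_Suc)+
  have "(\<Sum>j\<in>I. d ((a # l) ! j)) = (if 0 \<in> I then d a else 0) + (\<Sum>j\<in>Suc ` ?I. d ((a # l) ! j))"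
    by (subst I_eq, subst sum.union_disjoint) (use sub finite_subset in auto)
  also have "(\<Sum>j\<in>Suc ` ?I. d ((a # l) ! j)) = (\<Sum>j\<in>?I. d (l ! j))"
    by (subst sum.reindex) auto
  finally show ?case
    using Cons.IH[OF sub] by (simp add: nths_Cons)
qed

lemma ldeg_nths_add_ldeg_nths_compl:
  assumes "I \<subseteq> {..<length l}"
  shows "ldeg d (nths l I) + ldeg d (nths l ({..<length l} - I)) = ldeg d l"
proof -
  have "ldeg d l = (\<Sum>j\<in>{..<length l}. d (l ! j))"
    using ldeg_nths[of "{..<length l}" l d] by simp
  also have "\<dots> = (\<Sum>j\<in>I. d (l ! j)) + (\<Sum>j\<in>{..<length l} - I. d (l ! j))"
    using assms by (metis add.commute finite_lessThan sum.subset_diff)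
  finally show ?thesis
    using ldeg_nths[OF assms] ldeg_nths[of "{..<length l} - I" l d] by auto
qed

subsection \<open>Unshuffle sums\<close>

definition inversions :: "'b list \<Rightarrow> nat set \<Rightarrow> (nat \<times> nat) set" where
  "inversions l I = {(i, j). i < j \<and> j < length l \<and> i \<notin> I \<and> j \<in> I}"

lemma usgn_eq_prod_inversions:
  "usgn d l I = (\<Prod>(i, j)\<in>inversions l I. koz (d (l ! i) * d (l ! j)))"
  by (simp add: usgn_def inversions_def)

lemma preimage_Suc_image [simp]: "{j. Suc j \<in> Suc ` I} = I"
  by auto

lemma preimage_Suc_insert_0_image [simp]: "{j. Suc j \<in> insert 0 (Suc ` I)} = I"
  by auto

lemma usgn_Cons_insert_0: "usgn d (a # l) (insert 0 (Suc ` I)) = usgn d l I"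
proof -
  have "inversions (a # l) (insert 0 (Suc ` I)) = map_prod Suc Suc ` inversions l I"
    apply (auto simp: inversions_def image_iff)
    subgoal for i j by (cases i; cases j) auto
    done
  moreover have "inj_on (map_prod Suc Suc) (inversions l I)"
    by (auto simp: inj_on_def)
  ultimately show ?thesis
    by (simp add: usgn_eq_prod_inversions prod.reindex case_prod_beta)
qed

text \<open>Moving the first letter to the right factor passes it over the left factor.\<close>
lemma usgn_Cons_Suc_image:
  assumes I: "I \<subseteq> {..<length l}"
  shows "(usgn d (a # l) (Suc ` I) :: 'k::field_char_0) = koz (d a * ldeg d (nths l I)) * usgn d l I"
proof -
  let ?s = "\<lambda>(i, j). koz (d ((a # l) ! i) * d ((a # l) ! j)) :: 'k"
  have inv_eq: "inversions (a # l) (Suc ` I) = (\<lambda>j. (0, Suc j)) ` I \<union> map_prod Suc Suc ` inversions l I"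
    using I apply (auto simp: inversions_def image_iff)
    subgoal for i j by (cases i) auto
    done
  have fin: "finite I"
    using I finite_subset by blast
  have fin_inv: "finite (inversions l I)"
    by (rule finite_subset[of _ "{..<length l} \<times> {..<length l}"]) (auto simp: inversions_def)
  have "usgn d (a # l) (Suc ` I) = prod ?s ((\<lambda>j. (0, Suc j)) ` I) * prod ?s (map_prod Suc Suc ` inversions l I)"
    unfolding usgn_eq_prod_inversions inv_eq
    by (rule prod.union_disjoint) (use fin fin_inv in \<open>auto simp: inversions_def\<close>)
  also have "prod ?s ((\<lambda>j. (0, Suc j)) ` I) = (\<Prod>j\<in>I. koz (d a * d (l ! j)))"
    by (subst prod.reindex) (auto simp: inj_on_def)
  also have "\<dots> = koz (d a * ldeg d (nths l I))"
    using fin by (simp add: prod_koz ldeg_nths[OF I] sum_distrib_left)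
  also have "prod ?s (map_prod Suc Suc ` inversions l I) = usgn d l I"
    unfolding usgn_eq_prod_inversions by (subst prod.reindex) (auto simp: inj_on_def case_prod_beta)
  finally show ?thesis .
qed

lemma sum_Pow_lessThan_Suc:
  "(\<Sum>J\<in>Pow {..<Suc n}. F J) = (\<Sum>I\<in>Pow {..<n}. F (insert 0 (Suc ` I))) + (\<Sum>I\<in>Pow {..<n}. F (Suc ` I))"
proof -
  have Pow_eq: "Pow {..<Suc n} = (\<lambda>I. insert 0 (Suc ` I)) ` Pow {..<n} \<union> image Suc ` Pow {..<n}"
  proof (intro set_eqI iffI)
    fix J assume J: "J \<in> Pow {..<Suc n}"
    let ?I = "{j. Suc j \<in> J}"
    have "?I \<in> Pow {..<n}"
      using J by auto
    moreover have "J = (if 0 \<in> J then insert 0 (Suc ` ?I) else Suc ` ?I)"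
      by (auto simp: image_iff) (metis not0_implies_Suc)+
    ultimately show "J \<in> (\<lambda>I. insert 0 (Suc ` I)) ` Pow {..<n} \<union> image Suc ` Pow {..<n}"
      by (cases "0 \<in> J") auto
  qed auto
  have "inj_on (\<lambda>I. insert 0 (Suc ` I)) (Pow {..<n})"
    by (rule inj_onI) (metis preimage_Suc_insert_0_image)
  moreover have "inj_on (image Suc) (Pow {..<n})"
    by (rule inj_onI) (metis preimage_Suc_image)
  moreover have "(\<lambda>I. insert 0 (Suc ` I)) ` Pow {..<n} \<inter> image Suc ` Pow {..<n} = {}"
    by auto
  ultimately show ?thesis
    unfolding Pow_eq by (simp add: sum.union_disjoint sum.reindex)
qed

text \<open>
  \<open>cosum d l G\<close> is the pairing of the full (unreduced) unshuffle coproduct of the monomial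
  \<open>l\<close> with a bilinear form \<open>G\<close>: the first letter goes either to the left factor, or to the
  right factor, paying the Koszul sign for passing the left factor.\<close>
fun cosum :: "('b \<Rightarrow> int) \<Rightarrow> 'b list \<Rightarrow> ('b list \<Rightarrow> 'b list \<Rightarrow> 'k::field_char_0) \<Rightarrow> 'k" where
  "cosum d [] G = G [] []"
| "cosum d (a # l) G = cosum d l (\<lambda>x y. G (a # x) y) + cosum d l (\<lambda>x y. koz (d a * ldeg d x) * G x (a # y))"

lemma lessThan_Suc_diff_insert_0: "{..<Suc n} - insert 0 (Suc ` I) = Suc ` ({..<n} - I)"
  by (auto simp: lessThan_Suc_eq_insert_0)

lemma lessThan_Suc_diff_Suc_image: "{..<Suc n} - Suc ` I = insert 0 (Suc ` ({..<n} - I))"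
  by (auto simp: lessThan_Suc_eq_insert_0)

lemma cosum_eq_sum_Pow:
  "cosum d l G = (\<Sum>I\<in>Pow {..<length l}. usgn d l I * G (nths l I) (nths l ({..<length l} - I)))"
proof (induction l arbitrary: G)
  case Nil
  then show ?case by (simp add: usgn_def)
next
  case (Cons a l)
  show ?case
    unfolding cosum.simps Cons.IH length_Cons sum_Pow_lessThan_Suc
      lessThan_Suc_diff_insert_0 lessThan_Suc_diff_Suc_image
    by (intro arg_cong2[where f = "(+)"] sum.cong)
       (auto simp: usgn_Cons_insert_0 usgn_Cons_Suc_image nths_Cons)
qed

lemma cosum_add: "cosum d l (\<lambda>x y. G x y + H x y) = cosum d l G + cosum d l H"
  by (simp add: cosum_eq_sum_Pow sum.distrib distrib_left)

lemma cosum_cmult: "cosum d l (\<lambda>x y. c * G x y) = c * cosum d l G"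
  by (simp add: cosum_eq_sum_Pow sum_distrib_left mult_ac)

lemma cosum_sum: "cosum d l (\<lambda>x y. \<Sum>a\<in>A. G a x y) = (\<Sum>a\<in>A. cosum d l (G a))"
  by (simp add: cosum_eq_sum_Pow sum_distrib_left sum.swap[of _ A])

lemma cosum_zero: "cosum d l (\<lambda>x y. 0) = 0"
  by (simp add: cosum_eq_sum_Pow)

lemma cosum_cong_ldeg:
  "(\<And>x y. ldeg d x + ldeg d y = ldeg d l \<Longrightarrow> G x y = G' x y) \<Longrightarrow> cosum d l G = cosum d l G'"
proof (induction l arbitrary: G G')
  case (Cons a l)
  have "cosum d l (\<lambda>x y. G (a # x) y) = cosum d l (\<lambda>x y. G' (a # x) y)"
    by (rule Cons.IH) (simp add: Cons.prems)
  moreover have "cosum d l (\<lambda>x y. koz (d a * ldeg d x) * G x (a # y))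
      = cosum d l (\<lambda>x y. koz (d a * ldeg d x) * G' x (a # y))"
    by (rule Cons.IH) (simp add: Cons.prems)
  ultimately show ?case by simp
qed simp

lemma cosum_coassoc:
  "cosum d l (\<lambda>x y. cosum d x (\<lambda>u v. H u v y)) = cosum d l (\<lambda>x y. cosum d y (\<lambda>u w. H x u w))"
proof (induction l arbitrary: H)
  case (Cons a l)
  have third: "cosum d l (\<lambda>x y. koz (d a * ldeg d x) * cosum d x (\<lambda>u v. H u v (a # y)))
      = cosum d l (\<lambda>x y. cosum d x (\<lambda>u v. koz (d a * (ldeg d u + ldeg d v)) * H u v (a # y)))"
    by (simp only: cosum_cmult[symmetric]) (intro arg_cong[where f = "cosum d l"] ext cosum_cong_ldeg, simp)
  have "cosum d (a # l) (\<lambda>x y. cosum d x (\<lambda>u v. H u v y)) =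
      cosum d l (\<lambda>x y. cosum d x (\<lambda>u v. H (a # u) v y))
    + cosum d l (\<lambda>x y. cosum d x (\<lambda>u v. koz (d a * ldeg d u) * H u (a # v) y))
    + cosum d l (\<lambda>x y. cosum d x (\<lambda>u v. koz (d a * (ldeg d u + ldeg d v)) * H u v (a # y)))"
    by (simp add: cosum_add third)
  also have "\<dots> =
      cosum d l (\<lambda>x y. cosum d y (\<lambda>u w. H (a # x) u w))
    + cosum d l (\<lambda>x y. cosum d y (\<lambda>u w. koz (d a * ldeg d x) * H x (a # u) w))
    + cosum d l (\<lambda>x y. cosum d y (\<lambda>u w. koz (d a * (ldeg d x + ldeg d u)) * H x u (a # w)))"
    using Cons.IH[of "\<lambda>u v y. H (a # u) v y"]
      Cons.IH[of "\<lambda>u v y. koz (d a * ldeg d u) * H u (a # v) y"]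
      Cons.IH[of "\<lambda>u v y. koz (d a * (ldeg d u + ldeg d v)) * H u v (a # y)"]
    by simp
  also have "\<dots> = cosum d (a # l) (\<lambda>x y. cosum d y (\<lambda>u w. H x u w))"
    by (simp add: cosum_add cosum_cmult[symmetric] koz_add distrib_left mult_ac)
  finally show ?case .
qed simp

lemma cosum_cocomm:
  "cosum d l G = cosum d l (\<lambda>x y. koz (ldeg d x * ldeg d y) * G y x)"
proof (induction l arbitrary: G)
  case (Cons a l)
  have sign_left: "koz (d a * ldeg d x) * koz (ldeg d x * ldeg d (a # y)) = (koz (ldeg d x * ldeg d y) :: 'a)"
    for x y by (simp only: koz_add[symmetric], rule koz_cong, simp add: algebra_simps)
  have sign_right: "koz (ldeg d x * ldeg d y) * koz (d a * ldeg d y) = (koz (ldeg d (a # x) * ldeg d y) :: 'a)"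
    for x y by (simp only: koz_add[symmetric], rule koz_cong, simp add: algebra_simps)
  have "cosum d l (\<lambda>x y. G (a # x) y)
      = cosum d l (\<lambda>x y. koz (d a * ldeg d x) * (koz (ldeg d x * ldeg d (a # y)) * G (a # y) x))"
    by (subst Cons.IH, rule arg_cong[where f = "cosum d l"]) (simp only: fun_eq_iff mult.assoc[symmetric] sign_left, simp)
  moreover have "cosum d l (\<lambda>x y. koz (d a * ldeg d x) * G x (a # y))
      = cosum d l (\<lambda>x y. koz (ldeg d (a # x) * ldeg d y) * G y (a # x))"
    by (subst Cons.IH, rule arg_cong[where f = "cosum d l"]) (simp only: fun_eq_iff mult.assoc[symmetric] sign_right, simp)
  ultimately show ?case
    by (simp only: cosum.simps add.commute)
qed simp

definition rcosum :: "('b \<Rightarrow> int) \<Rightarrow> 'b list \<Rightarrow> ('b list \<Rightarrow> 'b list \<Rightarrow> 'k::field_char_0) \<Rightarrow> 'k" where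
  "rcosum d l G = cosum d l (\<lambda>x y. if x = [] \<or> y = [] then 0 else G x y)"

lemma rcosum_add: "rcosum d l (\<lambda>x y. G x y + H x y) = rcosum d l G + rcosum d l H"
  unfolding rcosum_def cosum_add[symmetric] by (rule arg_cong[where f = "cosum d l"]) (auto simp: fun_eq_iff)

lemma rcosum_cmult: "rcosum d l (\<lambda>x y. c * G x y) = c * rcosum d l G"
  unfolding rcosum_def cosum_cmult[symmetric] by (rule arg_cong[where f = "cosum d l"]) (auto simp: fun_eq_iff)

lemma rcosum_sum: "rcosum d l (\<lambda>x y. \<Sum>a\<in>A. G a x y) = (\<Sum>a\<in>A. rcosum d l (G a))"
  unfolding rcosum_def cosum_sum[symmetric] by (rule arg_cong[where f = "cosum d l"]) (auto simp: fun_eq_iff)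

lemma rcosum_neg: "rcosum d l (\<lambda>x y. - G x y) = - rcosum d l G"
  using rcosum_cmult[of d l "-1" G] by simp

lemma rcosum_diff: "rcosum d l (\<lambda>x y. G x y - H x y) = rcosum d l G - rcosum d l H"
  using rcosum_add[of d l G "\<lambda>x y. - H x y"] rcosum_neg[of d l H] by simp

lemma rcosum_cocomm: "rcosum d l G = rcosum d l (\<lambda>x y. koz (ldeg d x * ldeg d y) * G y x)"
  unfolding rcosum_def by (subst cosum_cocomm) (rule arg_cong[where f = "cosum d l"], auto simp: fun_eq_iff)

lemma rcosum_coassoc:
  "rcosum d l (\<lambda>x y. rcosum d x (\<lambda>u v. H u v y)) = rcosum d l (\<lambda>x y. rcosum d y (\<lambda>u w. H x u w))"
proof -
  let ?H = "\<lambda>u v y. if u = [] \<or> v = [] \<or> y = [] then 0 else H u v y"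
  have "rcosum d l (\<lambda>x y. rcosum d x (\<lambda>u v. H u v y)) = cosum d l (\<lambda>x y. cosum d x (\<lambda>u v. ?H u v y))"
    unfolding rcosum_def
    by (intro arg_cong[where f = "cosum d l"] ext) (auto intro!: arg_cong[where f = "cosum d _"] simp: cosum_zero)
  also have "\<dots> = cosum d l (\<lambda>x y. cosum d y (\<lambda>u w. ?H x u w))"
    by (rule cosum_coassoc)
  also have "\<dots> = rcosum d l (\<lambda>x y. rcosum d y (\<lambda>u w. H x u w))"
    unfolding rcosum_def
    by (intro arg_cong[where f = "cosum d l"] ext) (auto intro!: arg_cong[where f = "cosum d _"] simp: cosum_zero)
  finally show ?thesis .
qed

definition splittings :: "'b list \<Rightarrow> nat set set" where
  "splittings l = {I. I \<subseteq> {..<length l} \<and> I \<noteq> {} \<and> I \<noteq> {..<length l}}"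

lemma finite_splittings: "finite (splittings l)"
  by (rule finite_subset[of _ "Pow {..<length l}"]) (auto simp: splittings_def)

lemma nths_eq_Nil_iff: "I \<subseteq> {..<length l} \<Longrightarrow> nths l I = [] \<longleftrightarrow> I = {}"
proof -
  assume I: "I \<subseteq> {..<length l}"
  then have "{i. i < length l \<and> i \<in> I} = I" by auto
  moreover have "finite I" using I finite_subset by blast
  ultimately show ?thesis using length_nths[of l I] by (metis card_0_eq length_0_conv)
qed

lemma rcosum_eq_sum_splittings:
  "rcosum d l G = (\<Sum>I\<in>splittings l. usgn d l I * G (nths l I) (nths l ({..<length l} - I)))"
proof -
  have "rcosum d l G = (\<Sum>I\<in>Pow {..<length l}.
      if I \<in> splittings l then usgn d l I * G (nths l I) (nths l ({..<length l} - I)) else 0)"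
    unfolding rcosum_def cosum_eq_sum_Pow
    by (rule sum.cong) (auto simp: splittings_def nths_eq_Nil_iff)
  also have "\<dots> = (\<Sum>I\<in>splittings l. usgn d l I * G (nths l I) (nths l ({..<length l} - I)))"
    by (rule sum.mono_neutral_cong_right) (auto simp: splittings_def)
  finally show ?thesis .
qed

lemma distinct_filter_nths: "distinct (filter P l) \<Longrightarrow> distinct (filter P (nths l I))"
proof (induction l arbitrary: I)
  case (Cons a l)
  have "a \<notin> set (filter P (nths l {j. Suc j \<in> I}))" if "P a"
    using Cons.prems that set_nths_subset[of l "{j. Suc j \<in> I}"] by auto
  moreover have "distinct (filter P (nths l {j. Suc j \<in> I}))"
    using Cons.IH Cons.prems by (auto split: if_splits)
  ultimately show ?case by (auto simp: nths_Cons)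
qed simp

lemma valid_nths: "valid d l \<Longrightarrow> I \<subseteq> {..<length l} \<Longrightarrow> I \<noteq> {} \<Longrightarrow> valid d (nths l I)"
  unfolding valid_def by (simp add: nths_eq_Nil_iff sorted_nths distinct_filter_nths)

lemma valid_nths_splittings:
  assumes "valid d l" "I \<in> splittings l"
  shows "valid d (nths l I)" "valid d (nths l ({..<length l} - I))"
  using assms by (auto simp: splittings_def intro!: valid_nths)

lemma rcosum_cong_valid:
  assumes "valid d l"
    and "\<And>x y. valid d x \<Longrightarrow> valid d y \<Longrightarrow> ldeg d x + ldeg d y = ldeg d l \<Longrightarrow> G x y = G' x y"
  shows "rcosum d l G = rcosum d l G'"
  unfolding rcosum_eq_sum_splittings
  using assms valid_nths_splittings[OF assms(1)]
  by (intro sum.cong) (auto simp: splittings_def ldeg_nths_add_ldeg_nths_compl)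

subsection \<open>The coproduct and the carrier\<close>

lemma cop_apply:
  "cop d f (m1, m2) = (\<Sum>l\<in>{l. f l \<noteq> 0}. f l * rcosum d l (\<lambda>x y. if x = m1 \<and> y = m2 then 1 else 0))"
proof -
  have "(\<Sum>I\<in>{I. I \<subseteq> {..<length l} \<and> I \<noteq> {} \<and> I \<noteq> {..<length l}
           \<and> nths l I = m1 \<and> nths l ({..<length l} - I) = m2}. usgn d l I)
      = rcosum d l (\<lambda>x y. if x = m1 \<and> y = m2 then 1 else (0 :: 'a))" for l
  proof -
    have "{I. I \<subseteq> {..<length l} \<and> I \<noteq> {} \<and> I \<noteq> {..<length l}
           \<and> nths l I = m1 \<and> nths l ({..<length l} - I) = m2}
        = {I \<in> splittings l. nths l I = m1 \<and> nths l ({..<length l} - I) = m2}"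
      by (auto simp: splittings_def)
    then show ?thesis
      unfolding rcosum_eq_sum_splittings
      by (simp add: sum.inter_filter[OF finite_splittings]) (rule sum.cong, auto)
  qed
  then show ?thesis
    by (simp add: cop_def)
qed

definition unshuffles :: "('b list \<Rightarrow> 'k::zero) \<Rightarrow> ('b list \<times> 'b list) set" where
  "unshuffles f = (\<lambda>(l, I). (nths l I, nths l ({..<length l} - I))) ` Sigma {l. f l \<noteq> 0} splittings"

lemma finite_unshuffles: "finite {l. f l \<noteq> 0} \<Longrightarrow> finite (unshuffles f)"
  by (simp add: unshuffles_def finite_splittings)

lemma supp_cop_subset:
  fixes f :: "'b list \<Rightarrow> 'k::field_char_0"
  shows "{p. cop d f p \<noteq> 0} \<subseteq> unshuffles f"
proof
  fix p assume "p \<in> {p. cop d f p \<noteq> 0}"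
  then obtain m1 m2 where p: "p = (m1, m2)" "cop d f (m1, m2) \<noteq> 0"
    by (cases p) auto
  from p(2) obtain l where l: "f l \<noteq> 0" "rcosum d l (\<lambda>x y. if x = m1 \<and> y = m2 then 1 else (0::'k)) \<noteq> 0"
    unfolding cop_apply by (auto elim: sum.not_neutral_contains_not_neutral)
  from l(2) obtain I where "I \<in> splittings l"
      "usgn d l I * (if nths l I = m1 \<and> nths l ({..<length l} - I) = m2 then 1 else (0::'k)) \<noteq> 0"
    unfolding rcosum_eq_sum_splittings by (rule sum.not_neutral_contains_not_neutral)
  with l(1) p(1) show "p \<in> unshuffles f"
    unfolding unshuffles_def by (auto simp: image_iff split: if_splits)
qed

lemma finite_supp_cop: "finite {l. f l \<noteq> 0} \<Longrightarrow> finite {p. cop d f p \<noteq> 0}"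
  using supp_cop_subset finite_unshuffles finite_subset by metis

lemma valid_supp_cop:
  assumes "f \<in> SymC d" "cop d f p \<noteq> 0"
  shows "valid d (fst p)" "valid d (snd p)"
  using supp_cop_subset[of d f] assms valid_nths_splittings[of d]
  by (auto simp: unshuffles_def SymC_def)

lemma sum_supp_cop:
  fixes f :: "'b list \<Rightarrow> 'k::field_char_0"
  assumes fin: "finite {l. f l \<noteq> 0}"
  shows "(\<Sum>(m1, m2)\<in>{p. cop d f p \<noteq> 0}. cop d f (m1, m2) * h m1 m2)
       = (\<Sum>l\<in>{l. f l \<noteq> 0}. f l * rcosum d l h)"
proof -
  let ?S = "unshuffles f" and ?\<delta> = "\<lambda>m1 m2 x y. if x = m1 \<and> y = m2 then 1 else (0::'k)"
  have finS: "finite ?S"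
    using fin by (rule finite_unshuffles)
  have "(\<Sum>(m1, m2)\<in>{p. cop d f p \<noteq> 0}. cop d f (m1, m2) * h m1 m2) = (\<Sum>(m1, m2)\<in>?S. cop d f (m1, m2) * h m1 m2)"
    by (rule sum.mono_neutral_left[OF finS supp_cop_subset]) auto
  also have "\<dots> = (\<Sum>l\<in>{l. f l \<noteq> 0}. f l * (\<Sum>(m1, m2)\<in>?S. rcosum d l (?\<delta> m1 m2) * h m1 m2))"
    unfolding cop_apply
    by (simp add: sum_distrib_left sum_distrib_right mult.assoc case_prod_beta sum.swap[of _ ?S])
  also have "\<dots> = (\<Sum>l\<in>{l. f l \<noteq> 0}. f l * rcosum d l h)"
  proof (rule sum.cong[OF refl])
    fix l assume l: "l \<in> {l. f l \<noteq> 0}"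
    have "(\<Sum>(m1, m2)\<in>?S. rcosum d l (?\<delta> m1 m2) * h m1 m2) = rcosum d l (\<lambda>x y. \<Sum>(m1, m2)\<in>?S. ?\<delta> m1 m2 x y * h m1 m2)"
      by (simp add: rcosum_sum rcosum_cmult[symmetric] case_prod_beta mult.commute)
    also have "\<dots> = rcosum d l h"
      unfolding rcosum_eq_sum_splittings
    proof (rule sum.cong[OF refl])
      fix I assume I: "I \<in> splittings l"
      let ?x = "nths l I" and ?y = "nths l ({..<length l} - I)"
      have "(?x, ?y) \<in> ?S"
        using l I unfolding unshuffles_def by force
      moreover have "(\<Sum>(m1, m2)\<in>?S. ?\<delta> m1 m2 ?x ?y * h m1 m2) = (\<Sum>p\<in>?S. if p = (?x, ?y) then h ?x ?y else 0)"
        by (rule sum.cong) (auto split: if_splits)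
      ultimately have "(\<Sum>(m1, m2)\<in>?S. ?\<delta> m1 m2 ?x ?y * h m1 m2) = h ?x ?y"
        using finS by simp
      then show "usgn d l I * (\<Sum>(m1, m2)\<in>?S. ?\<delta> m1 m2 ?x ?y * h m1 m2) = usgn d l I * h ?x ?y"
        by simp
    qed
    finally show "f l * (\<Sum>(m1, m2)\<in>?S. rcosum d l (?\<delta> m1 m2) * h m1 m2) = f l * rcosum d l h"
      by simp
  qed
  finally show ?thesis .
qed

lemma bv_SymC: "valid d l \<Longrightarrow> (bv l :: 'b::{finite,linorder} list \<Rightarrow> 'k::field_char_0) \<in> SymC d"
  by (auto simp: SymC_def bv_def)

lemma bv_homog: "homog d (ldeg d l) (bv l :: 'b list \<Rightarrow> 'k::field_char_0)"
  by (auto simp: homog_def bv_def split: if_splits)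

lemma supp_bv [simp]: "{m. (bv l :: 'b list \<Rightarrow> 'k::field_char_0) m \<noteq> 0} = {l}"
  by (auto simp: bv_def)

lemma bv_self [simp]: "(bv l :: 'b list \<Rightarrow> 'k::field_char_0) l = 1"
  by (simp add: bv_def)

lemma SymC_finite_supp: "f \<in> SymC d \<Longrightarrow> finite {l. f l \<noteq> 0}"
  by (simp add: SymC_def)

lemma SymC_valid: "f \<in> SymC d \<Longrightarrow> f l \<noteq> 0 \<Longrightarrow> valid d l"
  by (simp add: SymC_def)

lemma SymC_sum:
  assumes "finite A" "\<And>a. a \<in> A \<Longrightarrow> g a \<in> SymC d"
  shows "(\<lambda>l. \<Sum>a\<in>A. c a * g a l) \<in> SymC d"
proof -
  have sub: "{l. (\<Sum>a\<in>A. c a * g a l) \<noteq> 0} \<subseteq> (\<Union>a\<in>A. {l. g a l \<noteq> 0})"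
    by (auto elim!: sum.not_neutral_contains_not_neutral)
  moreover have "finite (\<Union>a\<in>A. {l. g a l \<noteq> 0})"
    using assms by (auto simp: SymC_def)
  ultimately show ?thesis
    using assms(2) by (auto simp: SymC_def intro: finite_subset)
qed

lemma SymC_add: "f \<in> SymC d \<Longrightarrow> g \<in> SymC d \<Longrightarrow> (\<lambda>l. f l + g l) \<in> SymC d"
  using SymC_sum[of "{True, False}" "\<lambda>b. if b then f else g" d "\<lambda>_. 1"] by simp

lemma SymC_cmult: "f \<in> SymC d \<Longrightarrow> (\<lambda>l. c * f l) \<in> SymC d"
  using SymC_sum[of "{()}" "\<lambda>_. f" d "\<lambda>_. c"] by simp

lemma SymC_zero: "(\<lambda>l. 0) \<in> SymC d"
  by (simp add: SymC_def)

lemma homog_sum: "(\<And>a. a \<in> A \<Longrightarrow> homog d n (g a)) \<Longrightarrow> homog d n (\<lambda>l. \<Sum>a\<in>A. c a * g a l)"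
  unfolding homog_def by (auto elim!: sum.not_neutral_contains_not_neutral)

lemma homog_add: "homog d n f \<Longrightarrow> homog d n g \<Longrightarrow> homog d n (\<lambda>l. f l + g l)"
  unfolding homog_def by (metis add.right_neutral)

lemma SymC_rcosum:
  assumes "valid d l" "\<And>x y. valid d x \<Longrightarrow> valid d y \<Longrightarrow> G x y \<in> SymC d'"
  shows "(\<lambda>l'. rcosum d l (\<lambda>x y. G x y l')) \<in> SymC d'"
  unfolding rcosum_eq_sum_splittings
  using assms valid_nths_splittings[OF assms(1)] by (intro SymC_sum finite_splittings) auto

lemma homog_rcosum:
  assumes "valid d l"
    and "\<And>x y. valid d x \<Longrightarrow> valid d y \<Longrightarrow> ldeg d x + ldeg d y = ldeg d l \<Longrightarrow> homog d' n (G x y)"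
  shows "homog d' n (\<lambda>l'. rcosum d l (\<lambda>x y. G x y l'))"
  unfolding rcosum_eq_sum_splittings
  using assms valid_nths_splittings[OF assms(1)]
  by (intro homog_sum) (auto simp: splittings_def ldeg_nths_add_ldeg_nths_compl)

definition lin_on :: "('a::{finite,linorder} \<Rightarrow> int) \<Rightarrow> (('a list \<Rightarrow> 'k::field_char_0) \<Rightarrow> ('c \<Rightarrow> 'k)) \<Rightarrow> bool" where
  "lin_on d F \<longleftrightarrow> (\<forall>f\<in>SymC d. \<forall>g\<in>SymC d. F (\<lambda>l. f l + g l) = (\<lambda>l. F f l + F g l))
     \<and> (\<forall>c. \<forall>f\<in>SymC d. F (\<lambda>l. c * f l) = (\<lambda>l. c * F f l))"

lemma linmap_imp_lin_on: "linmap da db F \<Longrightarrow> lin_on da F"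
  by (simp add: linmap_def lin_on_def)

lemma lin_on_add: "lin_on d F \<Longrightarrow> f \<in> SymC d \<Longrightarrow> g \<in> SymC d \<Longrightarrow> F (\<lambda>l. f l + g l) = (\<lambda>l. F f l + F g l)"
  unfolding lin_on_def by blast

lemma lin_on_cmult: "lin_on d F \<Longrightarrow> f \<in> SymC d \<Longrightarrow> F (\<lambda>l. c * f l) = (\<lambda>l. c * F f l)"
  unfolding lin_on_def by blast

lemma lin_on_sum:
  fixes F :: "('a::{finite,linorder} list \<Rightarrow> 'k::field_char_0) \<Rightarrow> ('c \<Rightarrow> 'k)"
  assumes F: "lin_on d F" and "finite A" "\<And>a. a \<in> A \<Longrightarrow> g a \<in> SymC d"
  shows "F (\<lambda>l. \<Sum>a\<in>A. c a * g a l) = (\<lambda>l'. \<Sum>a\<in>A. c a * F (g a) l')"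
  using assms(2,3)
proof (induction A rule: finite_induct)
  case empty
  show ?case
    using lin_on_cmult[OF F SymC_zero, of 0] by simp
next
  case (insert a A)
  have "F (\<lambda>l. \<Sum>b\<in>insert a A. c b * g b l) = F (\<lambda>l. c a * g a l + (\<Sum>b\<in>A. c b * g b l))"
    using insert by simp
  also have "\<dots> = (\<lambda>l'. c a * F (g a) l' + F (\<lambda>l. \<Sum>b\<in>A. c b * g b l) l')"
    using insert by (simp add: lin_on_add[OF F] lin_on_cmult[OF F] SymC_cmult SymC_sum)
  finally show ?case
    using insert by simp
qed

lemma SymC_eq_sum_bv: "f \<in> SymC d \<Longrightarrow> f = (\<lambda>l'. \<Sum>l\<in>{l. f l \<noteq> 0}. f l * bv l l')"
proof (rule ext)
  fix l' assume "f \<in> SymC d"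
  then have "(\<Sum>l\<in>{l. f l \<noteq> 0}. f l * bv l l') = (\<Sum>l\<in>{l. f l \<noteq> 0}. if l' = l then f l else 0)"
    by (intro sum.cong) (auto simp: bv_def)
  with \<open>f \<in> SymC d\<close> show "f l' = (\<Sum>l\<in>{l. f l \<noteq> 0}. f l * bv l l')"
    by (simp add: SymC_finite_supp)
qed

lemma lin_on_expand:
  assumes "lin_on d F" "f \<in> SymC d"
  shows "F f = (\<lambda>l'. \<Sum>l\<in>{l. f l \<noteq> 0}. f l * F (bv l) l')"
proof -
  have "F f = F (\<lambda>l'. \<Sum>l\<in>{l. f l \<noteq> 0}. f l * bv l l')"
    using SymC_eq_sum_bv[OF assms(2)] by simp
  also have "\<dots> = (\<lambda>l'. \<Sum>l\<in>{l. f l \<noteq> 0}. f l * F (bv l) l')"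
    using assms by (intro lin_on_sum) (auto simp: SymC_finite_supp SymC_valid bv_SymC)
  finally show ?thesis .
qed

lemma lin_on_rcosum:
  assumes "lin_on d' F" "valid d l" "\<And>x y. valid d x \<Longrightarrow> valid d y \<Longrightarrow> G x y \<in> SymC d'"
  shows "F (\<lambda>l'. rcosum d l (\<lambda>x y. G x y l')) = (\<lambda>l'. rcosum d l (\<lambda>x y. F (G x y) l'))"
  unfolding rcosum_eq_sum_splittings
  using assms valid_nths_splittings[OF assms(2)] by (intro lin_on_sum finite_splittings) auto

lemma sum_supp_eq_sum_superset:
  "finite U \<Longrightarrow> {l. h l \<noteq> 0} \<subseteq> U \<Longrightarrow> (\<Sum>l\<in>{l. h l \<noteq> 0}. h l * X l) = (\<Sum>l\<in>U. h l * (X l :: 'k::field_char_0))"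
  by (rule sum.mono_neutral_left) auto

lemma cop_sum_comb:
  assumes "finite A" "\<And>a. a \<in> A \<Longrightarrow> g a \<in> SymC d"
  shows "cop d (\<lambda>l. \<Sum>a\<in>A. c a * g a l) p = (\<Sum>a\<in>A. c a * cop d (g a) p)"
proof -
  obtain m1 m2 where p: "p = (m1, m2)"
    by (cases p)
  let ?U = "\<Union>a\<in>A. {l. g a l \<noteq> 0}"
  let ?X = "\<lambda>l. rcosum d l (\<lambda>x y. if x = m1 \<and> y = m2 then 1 else 0)"
  have finU: "finite ?U"
    using assms by (auto simp: SymC_def)
  have "cop d (\<lambda>l. \<Sum>a\<in>A. c a * g a l) p = (\<Sum>l\<in>?U. (\<Sum>a\<in>A. c a * g a l) * ?X l)"
    unfolding p cop_apply
    by (rule sum_supp_eq_sum_superset[OF finU]) (auto elim!: sum.not_neutral_contains_not_neutral)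
  also have "\<dots> = (\<Sum>a\<in>A. c a * (\<Sum>l\<in>?U. g a l * ?X l))"
    by (simp add: sum_distrib_right sum_distrib_left mult.assoc sum.swap[of _ ?U])
  also have "\<dots> = (\<Sum>a\<in>A. c a * cop d (g a) p)"
    unfolding p cop_apply by (intro sum.cong refl, subst sum_supp_eq_sum_superset[OF finU]) auto
  finally show ?thesis .
qed

lemma cop_add: "f \<in> SymC d \<Longrightarrow> g \<in> SymC d \<Longrightarrow> cop d (\<lambda>l. f l + g l) p = cop d f p + cop d g p"
  using cop_sum_comb[of "{True, False}" "\<lambda>b. if b then f else g" d "\<lambda>_. 1" p] by simp

lemma cop_rcosum:
  assumes "valid d' l" "\<And>x y. valid d' x \<Longrightarrow> valid d' y \<Longrightarrow> G x y \<in> SymC d"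
  shows "cop d (\<lambda>l'. rcosum d' l (\<lambda>x y. G x y l')) p = rcosum d' l (\<lambda>x y. cop d (G x y) p)"
  unfolding rcosum_eq_sum_splittings
  using assms valid_nths_splittings[OF assms(1)] by (intro cop_sum_comb finite_splittings) auto

lemma tmap_cop_apply:
  fixes f :: "'b::{finite,linorder} list \<Rightarrow> 'k::field_char_0"
  assumes "finite {l. f l \<noteq> 0}"
  shows "tmap d q P Q (cop d f) (x, y)
    = (\<Sum>l\<in>{l. f l \<noteq> 0}. f l * rcosum d l (\<lambda>u w. koz (q * ldeg d u) * P (bv u) x * Q (bv w) y))"
  unfolding tmap_def using sum_supp_cop[OF assms, of d "\<lambda>u w. koz (q * ldeg d u) * P (bv u) x * Q (bv w) y"]
  by (simp add: mult.assoc case_prod_beta)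

lemma tmap_cop_bv:
  fixes P :: "('b::{finite,linorder} list \<Rightarrow> 'k::field_char_0) \<Rightarrow> ('c list \<Rightarrow> 'k)"
  shows "tmap d q P Q (cop d (bv b)) (x, y) = rcosum d b (\<lambda>u w. koz (q * ldeg d u) * P (bv u) x * Q (bv w) y)"
  using tmap_cop_apply[of "bv b :: 'b list \<Rightarrow> 'k" d q P Q x y] by (simp add: bv_def)

lemma tmap_add_left: "tmap da q (\<lambda>f l. P1 f l + P2 f l) Q g p = tmap da q P1 Q g p + tmap da q P2 Q g p"
  by (simp add: tmap_def case_prod_beta sum.distrib[symmetric] algebra_simps)

lemma tmap_add_right: "tmap da q P (\<lambda>f l. Q1 f l + Q2 f l) g p = tmap da q P Q1 g p + tmap da q P Q2 g p"
  by (simp add: tmap_def case_prod_beta sum.distrib[symmetric] algebra_simps)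

lemma supp_tmap_subset:
  fixes g :: "'a list \<times> 'b list \<Rightarrow> 'k::field_char_0"
  shows "{p. tmap da q P Q g p \<noteq> 0}
    \<subseteq> (\<Union>p\<in>{p. g p \<noteq> 0}. {x. P (bv (fst p)) x \<noteq> 0} \<times> {y. Q (bv (snd p)) y \<noteq> 0})"
proof
  fix z assume "z \<in> {p. tmap da q P Q g p \<noteq> 0}"
  then have "(\<Sum>p\<in>{p. g p \<noteq> 0}. g p * koz (q * ldeg da (fst p)) * P (bv (fst p)) (fst z) * Q (bv (snd p)) (snd z)) \<noteq> 0"
    by (simp add: tmap_def case_prod_beta)
  then obtain p where "g p \<noteq> 0" "g p * koz (q * ldeg da (fst p)) * P (bv (fst p)) (fst z) * Q (bv (snd p)) (snd z) \<noteq> 0"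
    by (auto elim: sum.not_neutral_contains_not_neutral)
  then show "z \<in> (\<Union>p\<in>{p. g p \<noteq> 0}. {x. P (bv (fst p)) x \<noteq> 0} \<times> {y. Q (bv (snd p)) y \<noteq> 0})"
    by (intro UN_I[of p]) (auto simp: mem_Times_iff)
qed

lemma sum_supp_add:
  fixes g1 :: "'a \<Rightarrow> 'k::field_char_0"
  assumes "finite {p. g1 p \<noteq> 0}" "finite {p. g2 p \<noteq> 0}"
  shows "(\<Sum>p\<in>{p. g1 p + g2 p \<noteq> 0}. (g1 p + g2 p) * h p)
     = (\<Sum>p\<in>{p. g1 p \<noteq> 0}. g1 p * h p) + (\<Sum>p\<in>{p. g2 p \<noteq> 0}. g2 p * h p)"
proof -
  let ?S = "{p. g1 p \<noteq> 0} \<union> {p. g2 p \<noteq> 0}"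
  have fin: "finite ?S"
    using assms by auto
  have "(\<Sum>p\<in>{p. g1 p + g2 p \<noteq> 0}. (g1 p + g2 p) * h p) = (\<Sum>p\<in>?S. (g1 p + g2 p) * h p)"
    by (rule sum.mono_neutral_left[OF fin]) auto
  also have "\<dots> = (\<Sum>p\<in>?S. g1 p * h p) + (\<Sum>p\<in>?S. g2 p * h p)"
    by (simp add: sum.distrib distrib_right)
  also have "(\<Sum>p\<in>?S. g1 p * h p) = (\<Sum>p\<in>{p. g1 p \<noteq> 0}. g1 p * h p)"
    by (rule sum.mono_neutral_right[OF fin]) auto
  also have "(\<Sum>p\<in>?S. g2 p * h p) = (\<Sum>p\<in>{p. g2 p \<noteq> 0}. g2 p * h p)"
    by (rule sum.mono_neutral_right[OF fin]) auto
  finally show ?thesis .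
qed

lemma sum_supp_tmap:
  fixes g :: "'a::{finite,linorder} list \<times> 'b list \<Rightarrow> 'k::field_char_0"
    and P :: "('a list \<Rightarrow> 'k) \<Rightarrow> ('c list \<Rightarrow> 'k)"
    and Q :: "('b list \<Rightarrow> 'k) \<Rightarrow> ('e list \<Rightarrow> 'k)"
  assumes fin: "finite {p. g p \<noteq> 0}"
    and fin_P: "\<And>p. g p \<noteq> 0 \<Longrightarrow> finite {x. P (bv (fst p)) x \<noteq> 0}"
    and fin_Q: "\<And>p. g p \<noteq> 0 \<Longrightarrow> finite {y. Q (bv (snd p)) y \<noteq> 0}"
  shows "(\<Sum>(x, y)\<in>{p. tmap da q P Q g p \<noteq> 0}. tmap da q P Q g (x, y) * h x y)
    = (\<Sum>(m1, m2)\<in>{p. g p \<noteq> 0}. g (m1, m2) * (koz (q * ldeg da m1) *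
         (\<Sum>x\<in>{x. P (bv m1) x \<noteq> 0}. \<Sum>y\<in>{y. Q (bv m2) y \<noteq> 0}. P (bv m1) x * Q (bv m2) y * h x y)))"
proof -
  let ?G = "{p. g p \<noteq> 0}"
  let ?X = "\<lambda>p. {x. P (bv (fst p)) x \<noteq> 0}" and ?Y = "\<lambda>p. {y. Q (bv (snd p)) y \<noteq> 0}"
  let ?c = "\<lambda>p. g p * koz (q * ldeg da (fst p))"
  let ?t = "\<lambda>p z. P (bv (fst p)) (fst z) * Q (bv (snd p)) (snd z) * h (fst z) (snd z)"
  define S where "S = (\<Union>p\<in>?G. ?X p \<times> ?Y p)"
  have finS: "finite S"
    unfolding S_def using fin fin_P fin_Q by auto
  have "(\<Sum>(x, y)\<in>{p. tmap da q P Q g p \<noteq> 0}. tmap da q P Q g (x, y) * h x y)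
      = (\<Sum>z\<in>S. tmap da q P Q g z * h (fst z) (snd z))"
    unfolding case_prod_beta prod.collapse
    by (rule sum.mono_neutral_left[OF finS]) (use supp_tmap_subset[of da q P Q g] in \<open>auto simp: S_def\<close>)
  also have "\<dots> = (\<Sum>z\<in>S. \<Sum>p\<in>?G. ?c p * ?t p z)"
    by (simp add: tmap_def case_prod_beta sum_distrib_right mult.assoc)
  also have "\<dots> = (\<Sum>p\<in>?G. ?c p * (\<Sum>z\<in>?X p \<times> ?Y p. ?t p z))"
  proof -
    have "(\<Sum>z\<in>S. ?t p z) = (\<Sum>z\<in>?X p \<times> ?Y p. ?t p z)" if "p \<in> ?G" for p
      by (rule sum.mono_neutral_right[OF finS]) (use that in \<open>auto simp: S_def\<close>)
    then show ?thesis
      by (subst sum.swap) (simp add: sum_distrib_left[symmetric])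
  qed
  finally show ?thesis
    by (simp add: case_prod_beta mult.assoc sum.cartesian_product)
qed

lemma finite_supp_tmap:
  fixes g :: "'a list \<times> 'b list \<Rightarrow> 'k::field_char_0"
  assumes "finite {p. g p \<noteq> 0}"
    and "\<And>p. g p \<noteq> 0 \<Longrightarrow> finite {x. P (bv (fst p)) x \<noteq> 0}"
    and "\<And>p. g p \<noteq> 0 \<Longrightarrow> finite {y. Q (bv (snd p)) y \<noteq> 0}"
  shows "finite {p. tmap da q P Q g p \<noteq> 0}"
  using assms by (intro finite_subset[OF supp_tmap_subset]) auto

lemma sum_supp_tmap_cop:
  fixes f :: "'a::{finite,linorder} list \<Rightarrow> 'k::field_char_0"
    and P :: "('a list \<Rightarrow> 'k) \<Rightarrow> ('c::{finite,linorder} list \<Rightarrow> 'k)"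
    and Q :: "('a list \<Rightarrow> 'k) \<Rightarrow> ('e::{finite,linorder} list \<Rightarrow> 'k)"
  assumes f: "f \<in> SymC d"
    and P: "\<And>m. valid d m \<Longrightarrow> P (bv m) \<in> SymC dc"
    and Q: "\<And>m. valid d m \<Longrightarrow> Q (bv m) \<in> SymC de"
  shows "(\<Sum>(x, y)\<in>{p. tmap d q P Q (cop d f) p \<noteq> 0}. tmap d q P Q (cop d f) (x, y) * h x y)
    = (\<Sum>l\<in>{l. f l \<noteq> 0}. f l * rcosum d l (\<lambda>m1 m2. koz (q * ldeg d m1) *
         (\<Sum>x\<in>{x. P (bv m1) x \<noteq> 0}. \<Sum>y\<in>{y. Q (bv m2) y \<noteq> 0}. P (bv m1) x * Q (bv m2) y * h x y)))"
proof -
  have "valid d (fst p)" "valid d (snd p)" if "cop d f p \<noteq> 0" for p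
    using valid_supp_cop[OF f that] by auto
  then show ?thesis
    using SymC_finite_supp[OF f]
    by (subst sum_supp_tmap)
       (auto intro!: finite_supp_cop SymC_finite_supp[OF P] SymC_finite_supp[OF Q]
         simp: sum_supp_cop[symmetric] case_prod_beta)
qed

subsection \<open>Two sign identities for iterated unshuffles\<close>

text \<open>
  With \<open>K a u z = Phi (T (bv a)) (bv u) z\<close>, the left side is the coproduct of \<open>PhiT (bv l)\<close>
  computed from the coderivations \<open>Phi x\<close>, the right side is the coderivation formula for \<open>PhiT\<close>.\<close>
lemma rcosum_coder_identity:
  fixes K :: "'b list \<Rightarrow> 'b list \<Rightarrow> 'b list \<Rightarrow> 'k::field_char_0"
  shows "rcosum d l (\<lambda>a b. rcosum d b (\<lambda>u w. K a u x * bv w y)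
            + rcosum d b (\<lambda>u w. koz ((ldeg d a + 1) * ldeg d u) * bv u x * K a w y))
   = rcosum d l (\<lambda>a b. rcosum d a (\<lambda>u w. K u w x) * bv b y)
     + rcosum d l (\<lambda>a b. koz (ldeg d a) * bv a x * rcosum d b (\<lambda>u w. K u w y))"
proof -
  have left: "rcosum d l (\<lambda>a b. rcosum d b (\<lambda>u w. K a u x * bv w y))
      = rcosum d l (\<lambda>a b. rcosum d a (\<lambda>u w. K u w x) * bv b y)"
    using rcosum_coassoc[of d l "\<lambda>a u w. K a u x * bv w y", symmetric]
    by (simp add: rcosum_cmult[symmetric] mult.commute)
  have swap_sign: "rcosum d s (\<lambda>a u. koz ((ldeg d a + 1) * ldeg d u) * bv u x * K a c y)
      = rcosum d s (\<lambda>a u. koz (ldeg d a) * bv a x * K u c y)" for s c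
  proof (subst rcosum_cocomm, intro arg_cong[where f = "rcosum d s"] ext)
    fix a u
    have "koz (ldeg d a * ldeg d u) * koz ((ldeg d u + 1) * ldeg d a) = (koz (ldeg d a) :: 'k)"
      by (simp only: koz_add[symmetric]) (rule koz_cong, simp add: algebra_simps)
    then show "koz (ldeg d a * ldeg d u) * (koz ((ldeg d u + 1) * ldeg d a) * bv a x * K u c y)
        = koz (ldeg d a) * bv a x * K u c y"
      by (simp only: mult.assoc[symmetric])
  qed
  have "rcosum d l (\<lambda>a b. rcosum d b (\<lambda>u w. koz ((ldeg d a + 1) * ldeg d u) * bv u x * K a w y))
      = rcosum d l (\<lambda>s c. rcosum d s (\<lambda>a u. koz ((ldeg d a + 1) * ldeg d u) * bv u x * K a c y))"
    by (rule rcosum_coassoc[symmetric])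
  also have "\<dots> = rcosum d l (\<lambda>s c. rcosum d s (\<lambda>a u. koz (ldeg d a) * bv a x * K u c y))"
    by (simp only: swap_sign)
  also have "\<dots> = rcosum d l (\<lambda>a b. koz (ldeg d a) * bv a x * rcosum d b (\<lambda>u w. K u w y))"
    by (subst rcosum_coassoc) (simp add: rcosum_cmult[symmetric] mult.assoc)
  finally show ?thesis
    using left by (simp add: rcosum_add)
qed

text \<open>
  The graded antisymmetrisation in the bracket term doubles under cocommutativity, which
  removes the factor \<open>1/2\<close>; coassociativity then matches it against the second summand.\<close>
lemma rcosum_bracket_cancel:
  fixes Z :: "'b list \<Rightarrow> 'b list \<Rightarrow> 'b list \<Rightarrow> 'k::field_char_0"
  shows "rcosum d l (\<lambda>a b. (1/2) * rcosum d a (\<lambda>u w. koz (ldeg d u + 1) *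
              (Z u w b - koz ((ldeg d u + 1) * (ldeg d w + 1)) * Z w u b))
          + koz (ldeg d a) * rcosum d b (\<lambda>u w. Z a u w)) = 0"
proof -
  have swapped: "rcosum d a (\<lambda>u w. koz (ldeg d u + 1) * koz ((ldeg d u + 1) * (ldeg d w + 1)) * Z w u b)
      = rcosum d a (\<lambda>u w. koz (ldeg d u) * Z u w b)" for a b
  proof (subst rcosum_cocomm, intro arg_cong[where f = "rcosum d a"] ext)
    fix u w
    have "koz (ldeg d u * ldeg d w + (ldeg d w + 1 + (ldeg d w + 1) * (ldeg d u + 1))) = (koz (ldeg d u) :: 'k)"
      by (rule koz_cong, rule dvdI[where k = "ldeg d u * ldeg d w + ldeg d w + 1"]) (simp add: algebra_simps)
    then show "koz (ldeg d u * ldeg d w) * (koz (ldeg d w + 1) * koz ((ldeg d w + 1) * (ldeg d u + 1)) * Z u w b)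
        = koz (ldeg d u) * Z u w b"
      by (simp only: mult.assoc[symmetric] koz_add[symmetric] koz_cong)
  qed
  have bracket: "(1/2) * rcosum d a (\<lambda>u w. koz (ldeg d u + 1) *
        (Z u w b - koz ((ldeg d u + 1) * (ldeg d w + 1)) * Z w u b))
      = - rcosum d a (\<lambda>u w. koz (ldeg d u) * Z u w b)" for a b
  proof -
    have "rcosum d a (\<lambda>u w. koz (ldeg d u + 1) * (Z u w b - koz ((ldeg d u + 1) * (ldeg d w + 1)) * Z w u b))
        = rcosum d a (\<lambda>u w. koz (ldeg d u + 1) * Z u w b)
          - rcosum d a (\<lambda>u w. koz (ldeg d u + 1) * koz ((ldeg d u + 1) * (ldeg d w + 1)) * Z w u b)"
      by (simp add: rcosum_diff[symmetric] right_diff_distrib mult.assoc)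
    also have "\<dots> = - 2 * rcosum d a (\<lambda>u w. koz (ldeg d u) * Z u w b)"
      by (subst swapped) (simp add: koz_plus_1 rcosum_neg)
    finally show ?thesis
      by simp
  qed
  have "rcosum d l (\<lambda>a b. koz (ldeg d a) * rcosum d b (\<lambda>u w. Z a u w))
      = rcosum d l (\<lambda>a b. rcosum d a (\<lambda>u w. koz (ldeg d u) * Z u w b))"
    using rcosum_coassoc[of d l "\<lambda>a u w. koz (ldeg d a) * Z a u w"] by (simp add: rcosum_cmult[symmetric])
  then show ?thesis
    by (simp only: bracket rcosum_add) (simp add: rcosum_neg)
qed

subsection \<open>The operator \<open>PhiT\<close>\<close>

locale O_operator_setting =
  fixes dE :: "'e::{finite,linorder} \<Rightarrow> int"
    and dV :: "'v::{finite,linorder} \<Rightarrow> int"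
    and ME :: "('e list \<Rightarrow> 'k::field_char_0) \<Rightarrow> ('e list \<Rightarrow> 'k)"
    and MV :: "('v list \<Rightarrow> 'k) \<Rightarrow> ('v list \<Rightarrow> 'k)"
    and Phi :: "('e list \<Rightarrow> 'k) \<Rightarrow> ('v list \<Rightarrow> 'k) \<Rightarrow> ('v list \<Rightarrow> 'k)"
    and T :: "('v list \<Rightarrow> 'k) \<Rightarrow> ('e list \<Rightarrow> 'k)"
  assumes lie_V: "lie_inf dV MV"
    and act: "action dE dV ME MV Phi"
    and O_op: "O_operator dE dV ME MV Phi T"
begin

abbreviation "PT \<equiv> PhiT dV Phi T"

abbreviation "MT \<equiv> (\<lambda>f l. PT f l + MV f l)"

lemma T_comorph: "comorph dV dE T"
  using O_op by (simp add: O_operator_def)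

lemma ME_T: "f \<in> SymC dV \<Longrightarrow> ME (T f) = T (MT f)"
  using O_op by (simp add: O_operator_def)

lemma T_SymC: "f \<in> SymC dV \<Longrightarrow> T f \<in> SymC dE"
  using T_comorph by (simp add: comorph_def linmap_def)

lemma T_lin_on: "lin_on dV T"
  using T_comorph linmap_imp_lin_on unfolding comorph_def by blast

lemma T_bv_SymC: "valid dV a \<Longrightarrow> T (bv a) \<in> SymC dE"
  by (rule T_SymC[OF bv_SymC])

lemma T_bv_homog: "valid dV a \<Longrightarrow> homog dE (ldeg dV a) (T (bv a))"
  using T_comorph bv_SymC bv_homog unfolding comorph_def degmap_def by fastforce

lemma T_cop: "f \<in> SymC dV \<Longrightarrow> cop dE (T f) = tmap dV 0 T T (cop dV f)"
  using T_comorph by (simp add: comorph_def)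

lemma Phi_add:
  "x \<in> SymC dE \<Longrightarrow> y \<in> SymC dE \<Longrightarrow> f \<in> SymC dV \<Longrightarrow> Phi (\<lambda>l. x l + y l) f = (\<lambda>l. Phi x f l + Phi y f l)"
  using act by (simp add: action_def)

lemma Phi_cmult: "x \<in> SymC dE \<Longrightarrow> f \<in> SymC dV \<Longrightarrow> Phi (\<lambda>l. c * x l) f = (\<lambda>l. c * Phi x f l)"
  using act by (simp add: action_def)

lemma lin_on_Phi_left: "f \<in> SymC dV \<Longrightarrow> lin_on dE (\<lambda>x. Phi x f)"
  unfolding lin_on_def using Phi_add Phi_cmult by blast

lemma lin_on_Phi_T_left: "f \<in> SymC dV \<Longrightarrow> lin_on dV (\<lambda>z. Phi (T z) f)"
  unfolding lin_on_def using lin_on_add[OF T_lin_on] lin_on_cmult[OF T_lin_on] T_SymC Phi_add Phi_cmult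
  by simp

lemma Phi_coder: "x \<in> SymC dE \<Longrightarrow> homog dE n x \<Longrightarrow> coder dV (n + 1) (Phi x)"
  using act by (simp add: action_def)

lemma Phi_lin_on: "x \<in> SymC dE \<Longrightarrow> homog dE n x \<Longrightarrow> lin_on dV (Phi x)"
  using Phi_coder linmap_imp_lin_on unfolding coder_def by blast

lemma Phi_SymC: "x \<in> SymC dE \<Longrightarrow> homog dE n x \<Longrightarrow> f \<in> SymC dV \<Longrightarrow> Phi x f \<in> SymC dV"
  using Phi_coder by (simp add: coder_def linmap_def)

lemma Phi_homog:
  "x \<in> SymC dE \<Longrightarrow> homog dE n x \<Longrightarrow> f \<in> SymC dV \<Longrightarrow> homog dV m f \<Longrightarrow> homog dV (m + (n + 1)) (Phi x f)"
  using Phi_coder by (simp add: coder_def degmap_def)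

lemma Phi_ME:
  "x \<in> SymC dE \<Longrightarrow> homog dE n x \<Longrightarrow> f \<in> SymC dV \<Longrightarrow>
   Phi (ME x) f = (\<lambda>l. dDiff MV (n + 1) (Phi x) f l
      + (1/2) * (\<Sum>(m1, m2)\<in>{p. cop dE x p \<noteq> 0}. cop dE x (m1, m2) *
           brk (ldeg dE m1 + 1) (ldeg dE m2 + 1) (Phi (bv m1)) (Phi (bv m2)) f l))"
  using act unfolding action_def by blast

lemma MV_coder: "coder dV 1 MV"
  using lie_V by (simp add: lie_inf_def)

lemma MV_SymC: "f \<in> SymC dV \<Longrightarrow> MV f \<in> SymC dV"
  using MV_coder by (simp add: coder_def linmap_def)

lemma MV_lin_on: "lin_on dV MV"
  using MV_coder linmap_imp_lin_on unfolding coder_def by blast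

lemma MV_MV: "f \<in> SymC dV \<Longrightarrow> MV (MV f) = (\<lambda>l. 0)"
  using lie_V by (simp add: lie_inf_def)

lemma Phi_T_bv_SymC: "valid dV a \<Longrightarrow> valid dV b \<Longrightarrow> Phi (T (bv a)) (bv b) \<in> SymC dV"
  by (rule Phi_SymC[OF T_bv_SymC T_bv_homog bv_SymC])

lemma Phi_T_bv_homog:
  "valid dV a \<Longrightarrow> valid dV b \<Longrightarrow> homog dV (ldeg dV b + (ldeg dV a + 1)) (Phi (T (bv a)) (bv b))"
  by (rule Phi_homog[OF T_bv_SymC T_bv_homog bv_SymC bv_homog])

lemma PT_expand:
  "f \<in> SymC dV \<Longrightarrow> PT f = (\<lambda>l'. \<Sum>l\<in>{l. f l \<noteq> 0}. f l * rcosum dV l (\<lambda>a b. Phi (T (bv a)) (bv b) l'))"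
  unfolding PhiT_def by (rule ext) (simp add: sum_supp_cop SymC_finite_supp)

lemma PT_bv: "valid dV a \<Longrightarrow> PT (bv a) = (\<lambda>l'. rcosum dV a (\<lambda>u w. Phi (T (bv u)) (bv w) l'))"
  by (simp add: PT_expand[OF bv_SymC])

lemma rcosum_Phi_T_SymC:
  "f \<in> SymC dV \<Longrightarrow> f l \<noteq> 0 \<Longrightarrow> (\<lambda>l'. rcosum dV l (\<lambda>a b. Phi (T (bv a)) (bv b) l')) \<in> SymC dV"
  by (rule SymC_rcosum) (auto intro: SymC_valid Phi_T_bv_SymC)

lemma PT_SymC: "f \<in> SymC dV \<Longrightarrow> PT f \<in> SymC dV"
  unfolding PT_expand by (intro SymC_sum SymC_finite_supp) (auto intro: rcosum_Phi_T_SymC)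

lemma PT_homog: "f \<in> SymC dV \<Longrightarrow> homog dV n f \<Longrightarrow> homog dV (n + 1) (PT f)"
  unfolding PT_expand
proof (intro homog_sum homog_rcosum)
  fix l x y
  assume "f \<in> SymC dV" "homog dV n f" "l \<in> {l. f l \<noteq> 0}"
    and xy: "valid dV x" "valid dV y" "ldeg dV x + ldeg dV y = ldeg dV l"
  then show "homog dV (n + 1) (Phi (T (bv x)) (bv y))"
    using Phi_T_bv_homog[OF xy(1,2)] by (auto simp: homog_def algebra_simps)
qed (auto intro: SymC_valid)

lemma PT_add:
  assumes f: "f \<in> SymC dV" and g: "g \<in> SymC dV"
  shows "PT (\<lambda>l. f l + g l) = (\<lambda>l. PT f l + PT g l)"
proof -
  let ?U = "{l. f l \<noteq> 0} \<union> {l. g l \<noteq> 0}"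
  have fin: "finite ?U"
    using f g by (simp add: SymC_finite_supp)
  show ?thesis
    unfolding PT_expand[OF f] PT_expand[OF g] PT_expand[OF SymC_add[OF f g]]
    by (subst (1 2 3) sum_supp_eq_sum_superset[OF fin]) (auto simp: sum.distrib distrib_right)
qed

lemma PT_cmult:
  assumes f: "f \<in> SymC dV"
  shows "PT (\<lambda>l. c * f l) = (\<lambda>l. c * PT f l)"
proof -
  have fin: "finite {l. f l \<noteq> 0}"
    using f by (simp add: SymC_finite_supp)
  show ?thesis
    unfolding PT_expand[OF f] PT_expand[OF SymC_cmult[OF f]]
    by (subst sum_supp_eq_sum_superset[OF fin]) (auto simp: sum_distrib_left mult.assoc)
qed

lemma PT_linmap: "linmap dV dV PT"
  unfolding linmap_def using PT_SymC PT_add PT_cmult by blast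

lemma cop_Phi_T_bv:
  assumes "valid dV a" "valid dV b"
  shows "cop dV (Phi (T (bv a)) (bv b)) (x, y)
     = rcosum dV b (\<lambda>u w. Phi (T (bv a)) (bv u) x * bv w y)
     + rcosum dV b (\<lambda>u w. koz ((ldeg dV a + 1) * ldeg dV u) * bv u x * Phi (T (bv a)) (bv w) y)"
proof -
  have "cop dV (Phi (T (bv a)) (bv b)) = (\<lambda>p. tmap dV 0 (Phi (T (bv a))) id (cop dV (bv b)) p
      + tmap dV (ldeg dV a + 1) id (Phi (T (bv a))) (cop dV (bv b)) p)"
    using Phi_coder[OF T_bv_SymC[OF assms(1)] T_bv_homog[OF assms(1)]] bv_SymC[OF assms(2)]
    unfolding coder_def by blast
  then show ?thesis
    by (simp add: tmap_cop_bv)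
qed

lemma PT_cop:
  assumes f: "f \<in> SymC dV"
  shows "cop dV (PT f) = (\<lambda>p. tmap dV 0 PT id (cop dV f) p + tmap dV 1 id PT (cop dV f) p)"
proof (rule ext, clarify)
  fix x y :: "'v list"
  let ?L = "{l. f l \<noteq> 0}"
  have fin: "finite ?L"
    using f by (rule SymC_finite_supp)
  have valid: "l \<in> ?L \<Longrightarrow> valid dV l" for l
    using f by (simp add: SymC_valid)
  have "cop dV (PT f) (x, y) = (\<Sum>l\<in>?L. f l * cop dV (\<lambda>l'. rcosum dV l (\<lambda>a b. Phi (T (bv a)) (bv b) l')) (x, y))"
    unfolding PT_expand[OF f] by (rule cop_sum_comb[OF fin]) (simp add: rcosum_Phi_T_SymC[OF f])
  also have "\<dots> = (\<Sum>l\<in>?L. f l * rcosum dV l (\<lambda>a b. cop dV (Phi (T (bv a)) (bv b)) (x, y)))"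
    using valid by (simp add: cop_rcosum Phi_T_bv_SymC)
  also have "\<dots> = (\<Sum>l\<in>?L. f l * rcosum dV l (\<lambda>a b. rcosum dV a (\<lambda>u w. Phi (T (bv u)) (bv w) x) * bv b y))
      + (\<Sum>l\<in>?L. f l * rcosum dV l (\<lambda>a b. koz (ldeg dV a) * bv a x * rcosum dV b (\<lambda>u w. Phi (T (bv u)) (bv w) y)))"
  proof -
    have "rcosum dV l (\<lambda>a b. cop dV (Phi (T (bv a)) (bv b)) (x, y))
      = rcosum dV l (\<lambda>a b. rcosum dV b (\<lambda>u w. Phi (T (bv a)) (bv u) x * bv w y)
          + rcosum dV b (\<lambda>u w. koz ((ldeg dV a + 1) * ldeg dV u) * bv u x * Phi (T (bv a)) (bv w) y))"
      if "l \<in> ?L" for l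
      using valid[OF that] by (rule rcosum_cong_valid) (simp add: cop_Phi_T_bv)
    then show ?thesis
      by (simp add: rcosum_coder_identity[of dV _ "\<lambda>a u z. Phi (T (bv a)) (bv u) z"] sum.distrib distrib_left)
  qed
  also have "\<dots> = tmap dV 0 PT id (cop dV f) (x, y) + tmap dV 1 id PT (cop dV f) (x, y)"
    unfolding tmap_cop_apply[OF fin] using valid
    by (intro arg_cong2[where f = "(+)"] sum.cong refl arg_cong[where f = "(*) _"] rcosum_cong_valid)
       (auto simp: PT_bv)
  finally show "cop dV (PT f) (x, y) = tmap dV 0 PT id (cop dV f) (x, y) + tmap dV 1 id PT (cop dV f) (x, y)" .
qed

lemma PT_coder: "coder dV 1 PT"
  unfolding coder_def degmap_def using PT_linmap PT_homog PT_cop by blast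

lemma MT_coder: "coder dV 1 MT"
proof -
  have "linmap dV dV MT"
    unfolding linmap_def
    using PT_SymC MV_SymC PT_add PT_cmult lin_on_add[OF MV_lin_on] lin_on_cmult[OF MV_lin_on]
    by (simp add: SymC_add fun_eq_iff distrib_left)
  moreover have "degmap dV dV 1 MT"
    using PT_homog MV_coder unfolding coder_def degmap_def by (blast intro: homog_add)
  moreover have "cop dV (MT f) = (\<lambda>p. tmap dV 0 MT id (cop dV f) p + tmap dV 1 id MT (cop dV f) p)"
    if f: "f \<in> SymC dV" for f
    using MV_coder f
    by (simp add: fun_eq_iff coder_def cop_add[OF PT_SymC[OF f] MV_SymC[OF f]] PT_cop[OF f]
        tmap_add_left tmap_add_right)
  ultimately show ?thesis
    unfolding coder_def by blast
qed

subsection \<open>\<open>PhiT + MV\<close> squares to zero\<close>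

lemma Phi_Phi_expand:
  assumes X: "X \<in> SymC dE" "homog dE nx X" and Y: "Y \<in> SymC dE" "homog dE ny Y" and f: "f \<in> SymC dV"
  shows "(\<Sum>e1\<in>{e. X e \<noteq> 0}. \<Sum>e2\<in>{e. Y e \<noteq> 0}. X e1 * Y e2 * Phi (bv e1) (Phi (bv e2) f) l')
    = Phi X (Phi Y f) l'"
proof -
  have "Phi (bv e1) (Phi Y f) l' = (\<Sum>e2\<in>{e. Y e \<noteq> 0}. Y e2 * Phi (bv e1) (Phi (bv e2) f) l')"
    if "e1 \<in> {e. X e \<noteq> 0}" for e1
  proof -
    have "valid dE e1"
      using that X(1) by (simp add: SymC_valid)
    then show ?thesis
      unfolding lin_on_expand[OF lin_on_Phi_left[OF f] Y(1)] using Y(1) f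
      by (subst lin_on_sum[OF Phi_lin_on[OF bv_SymC bv_homog]])
         (auto simp: SymC_finite_supp intro: Phi_SymC[OF bv_SymC bv_homog] SymC_valid)
  qed
  then have "(\<Sum>e1\<in>{e. X e \<noteq> 0}. \<Sum>e2\<in>{e. Y e \<noteq> 0}. X e1 * Y e2 * Phi (bv e1) (Phi (bv e2) f) l')
      = (\<Sum>e1\<in>{e. X e \<noteq> 0}. X e1 * Phi (bv e1) (Phi Y f) l')"
    by (simp add: sum_distrib_left mult.assoc)
  also have "\<dots> = Phi X (Phi Y f) l'"
    using lin_on_expand[OF lin_on_Phi_left[OF Phi_SymC[OF Y f]] X(1)] by (simp add: fun_eq_iff)
  finally show ?thesis .
qed

lemma sum_brk_Phi_bv:
  assumes X: "X \<in> SymC dE" "homog dE nx X" and Y: "Y \<in> SymC dE" "homog dE ny Y" and f: "f \<in> SymC dV"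
  shows "(\<Sum>e1\<in>{e. X e \<noteq> 0}. \<Sum>e2\<in>{e. Y e \<noteq> 0}. X e1 * Y e2 *
            brk (ldeg dE e1 + 1) (ldeg dE e2 + 1) (Phi (bv e1)) (Phi (bv e2)) f l')
       = brk (nx + 1) (ny + 1) (Phi X) (Phi Y) f l'"
proof -
  let ?q = "nx + 1" and ?p = "ny + 1"
  let ?A = "\<lambda>e1 e2. Phi (bv e1) (Phi (bv e2) f) l'" and ?C = "\<lambda>e1 e2. Phi (bv e2) (Phi (bv e1) f) l'"
  have "(\<Sum>e1\<in>{e. X e \<noteq> 0}. \<Sum>e2\<in>{e. Y e \<noteq> 0}. X e1 * Y e2 *
            brk (ldeg dE e1 + 1) (ldeg dE e2 + 1) (Phi (bv e1)) (Phi (bv e2)) f l')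
     = (\<Sum>e1\<in>{e. X e \<noteq> 0}. \<Sum>e2\<in>{e. Y e \<noteq> 0}.
          koz ?q * (X e1 * Y e2 * ?A e1 e2) - koz ?q * koz (?q * ?p) * (Y e2 * X e1 * ?C e1 e2))"
    using X(2) Y(2) by (intro sum.cong refl) (auto simp: homog_def brk_def algebra_simps)
  also have "\<dots> = koz ?q * (\<Sum>e1\<in>{e. X e \<noteq> 0}. \<Sum>e2\<in>{e. Y e \<noteq> 0}. X e1 * Y e2 * ?A e1 e2)
      - koz ?q * koz (?q * ?p) * (\<Sum>e2\<in>{e. Y e \<noteq> 0}. \<Sum>e1\<in>{e. X e \<noteq> 0}. Y e2 * X e1 * ?C e1 e2)"
    by (simp add: sum_subtractf sum_distrib_left sum.swap[of _ "{e. Y e \<noteq> 0}"])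
  also have "\<dots> = brk ?q ?p (Phi X) (Phi Y) f l'"
    using Phi_Phi_expand[OF X Y f, of l'] Phi_Phi_expand[OF Y X f, of l'] by (simp add: brk_def algebra_simps)
  finally show ?thesis .
qed

lemma PT_comp_coder:
  assumes W: "coder dV 1 W" and f: "f \<in> SymC dV"
  shows "PT (W f) l' = (\<Sum>l\<in>{l. f l \<noteq> 0}. f l * rcosum dV l (\<lambda>a b. Phi (T (W (bv a))) (bv b) l'
            + koz (ldeg dV a) * Phi (T (bv a)) (W (bv b)) l'))"
proof -
  have W_SymC: "g \<in> SymC dV \<Longrightarrow> W g \<in> SymC dV" for g
    using W by (simp add: coder_def linmap_def)
  have W_bv_SymC: "valid dV m \<Longrightarrow> W (bv m) \<in> SymC dV" and id_bv_SymC: "valid dV m \<Longrightarrow> id (bv m) \<in> SymC dV" for m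
    by (simp_all add: W_SymC bv_SymC)
  have fin: "finite {l. f l \<noteq> 0}"
    using f by (rule SymC_finite_supp)
  have valid_cop: "valid dV (fst p)" "valid dV (snd p)" if "cop dV f p \<noteq> 0" for p
    using valid_supp_cop[OF f that] by auto
  have finite_tmap: "finite {p. tmap dV 0 W id (cop dV f) p \<noteq> 0}" "finite {p. tmap dV 1 id W (cop dV f) p \<noteq> 0}"
    using valid_cop by (auto intro!: finite_supp_tmap finite_supp_cop[OF fin] SymC_finite_supp W_SymC bv_SymC)
  let ?h = "\<lambda>x y. Phi (T (bv x)) (bv y) l'"
  have "PT (W f) l' = (\<Sum>(x, y)\<in>{p. tmap dV 0 W id (cop dV f) p \<noteq> 0}. tmap dV 0 W id (cop dV f) (x, y) * ?h x y)
      + (\<Sum>(x, y)\<in>{p. tmap dV 1 id W (cop dV f) p \<noteq> 0}. tmap dV 1 id W (cop dV f) (x, y) * ?h x y)"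
    unfolding PhiT_def using W f
    by (simp add: coder_def case_prod_beta sum_supp_add[OF finite_tmap, symmetric])
  also have "(\<Sum>(x, y)\<in>{p. tmap dV 0 W id (cop dV f) p \<noteq> 0}. tmap dV 0 W id (cop dV f) (x, y) * ?h x y)
     = (\<Sum>l\<in>{l. f l \<noteq> 0}. f l * rcosum dV l (\<lambda>a b. Phi (T (W (bv a))) (bv b) l'))"
  proof -
    have "koz (0 * ldeg dV a) * (\<Sum>x | W (bv a) x \<noteq> 0. \<Sum>y | id (bv b) y \<noteq> 0. W (bv a) x * id (bv b) y * ?h x y)
        = Phi (T (W (bv a))) (bv b) l'" if "valid dV a" "valid dV b" for a b
      using lin_on_expand[OF lin_on_Phi_T_left[OF bv_SymC[OF that(2)]] W_bv_SymC[OF that(1)]]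
      by (simp add: fun_eq_iff)
    then have "rcosum dV l (\<lambda>a b. koz (0 * ldeg dV a) *
          (\<Sum>x | W (bv a) x \<noteq> 0. \<Sum>y | id (bv b) y \<noteq> 0. W (bv a) x * id (bv b) y * ?h x y))
        = rcosum dV l (\<lambda>a b. Phi (T (W (bv a))) (bv b) l')" if "f l \<noteq> 0" for l
      using SymC_valid[OF f that] by (intro rcosum_cong_valid) auto
    then show ?thesis
      by (subst sum_supp_tmap_cop[where P = W and Q = id and q = 0 and dc = dV and de = dV, OF f]) (auto simp: W_bv_SymC bv_SymC)
  qed
  also have "(\<Sum>(x, y)\<in>{p. tmap dV 1 id W (cop dV f) p \<noteq> 0}. tmap dV 1 id W (cop dV f) (x, y) * ?h x y)
     = (\<Sum>l\<in>{l. f l \<noteq> 0}. f l * rcosum dV l (\<lambda>a b. koz (ldeg dV a) * Phi (T (bv a)) (W (bv b)) l'))"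
  proof -
    have "koz (1 * ldeg dV a) * (\<Sum>x | id (bv a) x \<noteq> 0. \<Sum>y | W (bv b) y \<noteq> 0. id (bv a) x * W (bv b) y * ?h x y)
        = koz (ldeg dV a) * Phi (T (bv a)) (W (bv b)) l'" if "valid dV a" "valid dV b" for a b
      using lin_on_expand[OF Phi_lin_on[OF T_bv_SymC[OF that(1)] T_bv_homog[OF that(1)]] W_bv_SymC[OF that(2)]]
      by (simp add: fun_eq_iff)
    then have "rcosum dV l (\<lambda>a b. koz (1 * ldeg dV a) *
          (\<Sum>x | id (bv a) x \<noteq> 0. \<Sum>y | W (bv b) y \<noteq> 0. id (bv a) x * W (bv b) y * ?h x y))
        = rcosum dV l (\<lambda>a b. koz (ldeg dV a) * Phi (T (bv a)) (W (bv b)) l')" if "f l \<noteq> 0" for l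
      using SymC_valid[OF f that] by (intro rcosum_cong_valid) auto
    then show ?thesis
      by (subst sum_supp_tmap_cop[where P = id and Q = W and q = 1 and dc = dV and de = dV, OF f]) (auto simp: W_bv_SymC bv_SymC)
  qed
  finally show ?thesis
    by (simp add: rcosum_add sum.distrib distrib_left)
qed

lemma MV_PT:
  assumes f: "f \<in> SymC dV"
  shows "MV (PT f) l' = (\<Sum>l\<in>{l. f l \<noteq> 0}. f l * rcosum dV l (\<lambda>a b. MV (Phi (T (bv a)) (bv b)) l'))"
proof -
  have "MV (PT f) = (\<lambda>l'. \<Sum>l\<in>{l. f l \<noteq> 0}. f l * MV (\<lambda>l'. rcosum dV l (\<lambda>a b. Phi (T (bv a)) (bv b) l')) l')"
    unfolding PT_expand[OF f]
    by (rule lin_on_sum[OF MV_lin_on SymC_finite_supp[OF f]]) (simp add: rcosum_Phi_T_SymC[OF f])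
  also have "\<dots> = (\<lambda>l'. \<Sum>l\<in>{l. f l \<noteq> 0}. f l * rcosum dV l (\<lambda>a b. MV (Phi (T (bv a)) (bv b)) l'))"
    using SymC_valid[OF f] by (simp add: lin_on_rcosum[OF MV_lin_on _ Phi_T_bv_SymC])
  finally show ?thesis
    by simp
qed

text \<open>Since \<open>T\<close> is a comorphism, the Sweedler components of \<open>T (bv a)\<close> are those of \<open>a\<close> mapped by \<open>T\<close>.\<close>
lemma sum_cop_T_brk:
  assumes a: "valid dV a" and f: "f \<in> SymC dV"
  shows "(\<Sum>(m1, m2)\<in>{p. cop dE (T (bv a)) p \<noteq> 0}. cop dE (T (bv a)) (m1, m2) *
            brk (ldeg dE m1 + 1) (ldeg dE m2 + 1) (Phi (bv m1)) (Phi (bv m2)) f l')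
    = rcosum dV a (\<lambda>u w. brk (ldeg dV u + 1) (ldeg dV w + 1) (Phi (T (bv u))) (Phi (T (bv w))) f l')"
proof -
  have "koz (0 * ldeg dV u) * (\<Sum>x | T (bv u) x \<noteq> 0. \<Sum>y | T (bv w) y \<noteq> 0. T (bv u) x * T (bv w) y *
        brk (ldeg dE x + 1) (ldeg dE y + 1) (Phi (bv x)) (Phi (bv y)) f l')
      = brk (ldeg dV u + 1) (ldeg dV w + 1) (Phi (T (bv u))) (Phi (T (bv w))) f l'"
    if "valid dV u" "valid dV w" for u w
    using sum_brk_Phi_bv[OF T_bv_SymC[OF that(1)] T_bv_homog[OF that(1)] T_bv_SymC[OF that(2)] T_bv_homog[OF that(2)] f]
    by (simp add: mult.assoc)
  then show ?thesis
    unfolding T_cop[OF bv_SymC[OF a]]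
    by (subst sum_supp_tmap_cop[where P = T and Q = T and dc = dE and de = dE, OF bv_SymC[OF a]])
       (auto intro!: rcosum_cong_valid[OF a] T_bv_SymC)
qed

text \<open>
  The contribution of one pair of Sweedler components to \<open>MT (MT f)\<close>: the O-operator equation
  turns the first two terms into \<open>Phi (ME (T (bv a)))\<close>, which the action identity expands.\<close>
lemma MT_MT_pair:
  assumes a: "valid dV a" and b: "valid dV b"
  shows "(Phi (T (PT (bv a))) (bv b) l' + koz (ldeg dV a) * Phi (T (bv a)) (PT (bv b)) l')
       + (Phi (T (MV (bv a))) (bv b) l' + koz (ldeg dV a) * Phi (T (bv a)) (MV (bv b)) l')
       + MV (Phi (T (bv a)) (bv b)) l'
     = (1/2) * rcosum dV a (\<lambda>u w. koz (ldeg dV u + 1) * (Phi (T (bv u)) (Phi (T (bv w)) (bv b)) l'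
           - koz ((ldeg dV u + 1) * (ldeg dV w + 1)) * Phi (T (bv w)) (Phi (T (bv u)) (bv b)) l'))
       + koz (ldeg dV a) * rcosum dV b (\<lambda>u w. Phi (T (bv a)) (Phi (T (bv u)) (bv w)) l')"
proof -
  let ?x = "T (bv a)" and ?b = "bv b :: 'v list \<Rightarrow> 'k" and ?n = "ldeg dV a"
  have a_SymC: "bv a \<in> SymC dV" and b_SymC: "?b \<in> SymC dV"
    using a b by (simp_all add: bv_SymC)
  have "Phi (T (PT (bv a))) ?b l' + Phi (T (MV (bv a))) ?b l' = Phi (ME ?x) ?b l'"
    unfolding ME_T[OF a_SymC] lin_on_add[OF T_lin_on PT_SymC[OF a_SymC] MV_SymC[OF a_SymC]]
    by (simp add: Phi_add[OF T_SymC[OF PT_SymC[OF a_SymC]] T_SymC[OF MV_SymC[OF a_SymC]] b_SymC])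
  also have "\<dots> = - MV (Phi ?x ?b) l' - koz ?n * Phi ?x (MV ?b) l'
      + (1/2) * rcosum dV a (\<lambda>u w. brk (ldeg dV u + 1) (ldeg dV w + 1) (Phi (T (bv u))) (Phi (T (bv w))) ?b l')"
    using Phi_ME[OF T_bv_SymC[OF a] T_bv_homog[OF a] b_SymC] sum_cop_T_brk[OF a b_SymC, of l']
    by (simp add: dDiff_def koz_plus_1)
  finally have action: "Phi (T (PT (bv a))) ?b l' + Phi (T (MV (bv a))) ?b l' = \<dots>" .
  have "Phi ?x (PT ?b) l' = rcosum dV b (\<lambda>u w. Phi ?x (Phi (T (bv u)) (bv w)) l')"
    unfolding PT_bv[OF b]
    by (subst lin_on_rcosum[OF Phi_lin_on[OF T_bv_SymC[OF a] T_bv_homog[OF a]] b Phi_T_bv_SymC]) auto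
  with action show ?thesis
    by (simp add: brk_def algebra_simps)
qed

lemma MT_MT:
  assumes f: "f \<in> SymC dV"
  shows "MT (MT f) = (\<lambda>l. 0)"
proof
  fix l'
  let ?E = "\<lambda>a b. (Phi (T (PT (bv a))) (bv b) l' + koz (ldeg dV a) * Phi (T (bv a)) (PT (bv b)) l')
       + (Phi (T (MV (bv a))) (bv b) l' + koz (ldeg dV a) * Phi (T (bv a)) (MV (bv b)) l')
       + MV (Phi (T (bv a)) (bv b)) l'"
  let ?F = "\<lambda>a b. (1/2) * rcosum dV a (\<lambda>u w. koz (ldeg dV u + 1) * (Phi (T (bv u)) (Phi (T (bv w)) (bv b)) l'
           - koz ((ldeg dV u + 1) * (ldeg dV w + 1)) * Phi (T (bv w)) (Phi (T (bv u)) (bv b)) l'))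
       + koz (ldeg dV a) * rcosum dV b (\<lambda>u w. Phi (T (bv a)) (Phi (T (bv u)) (bv w)) l')"
  have "MT (MT f) l' = PT (PT f) l' + PT (MV f) l' + (MV (PT f) l' + MV (MV f) l')"
    using PT_add[OF PT_SymC[OF f] MV_SymC[OF f]] lin_on_add[OF MV_lin_on PT_SymC[OF f] MV_SymC[OF f]]
    by (simp add: fun_eq_iff)
  also have "\<dots> = (\<Sum>l\<in>{l. f l \<noteq> 0}. f l * rcosum dV l ?E)"
    unfolding PT_comp_coder[OF PT_coder f] PT_comp_coder[OF MV_coder f] MV_PT[OF f] MV_MV[OF f]
    by (simp add: rcosum_add sum.distrib distrib_left)
  also have "\<dots> = 0"
  proof (rule sum.neutral, rule ballI)
    fix l assume "l \<in> {l. f l \<noteq> 0}"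
    then have "rcosum dV l ?E = rcosum dV l ?F"
      using f by (intro rcosum_cong_valid MT_MT_pair) (simp_all add: SymC_valid)
    also have "\<dots> = 0"
      by (rule rcosum_bracket_cancel)
    finally show "f l * rcosum dV l ?E = 0"
      by simp
  qed
  finally show "MT (MT f) l' = 0" .
qed

end

theorem mainTheorem6:
  fixes dE :: "'e::{finite,linorder} \<Rightarrow> int"
    and dV :: "'v::{finite,linorder} \<Rightarrow> int"
    and ME :: "('e list \<Rightarrow> 'k::field_char_0) \<Rightarrow> ('e list \<Rightarrow> 'k)"
    and MV :: "('v list \<Rightarrow> 'k) \<Rightarrow> ('v list \<Rightarrow> 'k)"
    and Phi :: "('e list \<Rightarrow> 'k) \<Rightarrow> ('v list \<Rightarrow> 'k) \<Rightarrow> ('v list \<Rightarrow> 'k)"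
    and T :: "('v list \<Rightarrow> 'k) \<Rightarrow> ('e list \<Rightarrow> 'k)"
  assumes "lie_inf dE ME"
    and "lie_inf dV MV"
    and "action dE dV ME MV Phi"
    and "O_operator dE dV ME MV Phi T"
  shows "lie_inf dV (\<lambda>f l. PhiT dV Phi T f l + MV f l)
       \<and> lie_morph dV dE (\<lambda>f l. PhiT dV Phi T f l + MV f l) ME T"
proof -
  interpret O_operator_setting dE dV ME MV Phi T
    using assms(2-4) by unfold_locales
  have "lie_inf dV MT"
    unfolding lie_inf_def using MT_coder MT_MT by blast
  moreover have "lie_morph dV dE MT ME T"
    unfolding lie_morph_def using T_comorph ME_T by simp
  ultimately show ?thesis
    by blast
qed

end
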